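(* (i) For every $s\in\mathbb{R}$ there exists $L_0\ge1$ such that for every $L\ge L_0$ and $z\in\mathbb{Z}^d$, $$\Big\{\max_{x\in Q_{R_L,z}}\Xi_L(x)\ge a^\Xi_L-\frac{s}{a_L}\Big\}\cap\Big\{\max_{x\in Q_{R_L+r_L,z}}\xi_L(x)\le a_L-\theta\Big\}=\emptyset.$$ (ii) For every $z\in\mathbb{Z}^d$, $s\in\mathbb{R}$ and $\chi\in\{\xi,\Xi\}$, $\lim_{L\to\infty}(L/R_L)^d\,\mathbb{P}(\mathcal{A}^\chi_{L,z}(s))=0$. (iii) For every $z\in\mathbb{Z}^d$ and $s\in\mathbb{R}$, $$\lim_{L\to\infty}\Big(\frac{L}{R_L}\Big)^d\mathbb{P}\Big(\max_{x\in Q_{R_L,z}}\Xi_L(x)\ge a^\Xi_L-\frac{s}{a_L};\ w_{L,z}\neq w^\Xi_{L,z}\Big)=0.$$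
   Context: Fix $d\ge1$; $|x|$ Euclidean norm; $Q_a=[-a/2,a/2]^d\cap\mathbb{Z}^d$, $Q_{a,x}=x+Q_a$, $Q_a^{\neq0}=Q_a\setminus\{0\}$; $u_L\ll v_L$ means $u_L/v_L\to0$. For each $L\ge1$, $(\xi_L(x))_{x\in\mathbb{Z}^d}$ is a centred shift-stationary Gaussian field with unit variance and non-negative covariance $v_L$ with (I) $\sup_{|x|\ge\exp(\sqrt{\ln L})}v_L(x)\ln|x|\to0$; (II) there are $\mathfrak c,\mathfrak c'>0$ with $1-e^{\mathfrak c'|x|}/d_L\le v_L(x)\le1-\mathfrak c/d_L$ for all $L,x\ne0$, where $\sup_{|x|=1}v_L(x)=1-1/d_L$. $a_L$: $\mathbb{P}(\xi_L(0)>a_L)=L^{-d}$. Fix $R_L,r_L$ with $a_L\ll\ln R_L\ll a_L^2/d_L$, $\ln a_L\le\ln r_L\ll\sqrt{a_L}$. $\Delta f(x)=\sum_{|y-x|=1}(f(y)-f(x))$. $\mathcal{S}_L(x)=a_L(1-v_L(x))$; $\bar\varphi_L\ge0$ the normalised principal eigenfunction of $\Delta-\mathcal{S}_L$ on $Q_{r_L}$ (Dirichlet). $\zeta_{L,x_0}(x)=\xi_L(x)-\xi_L(x_0)v_L(x-x_0)$; $\Phi_L(y)=\sum_{x\in Q_{r_L}^{\neq0}}\bar\varphi_L(x)^2\zeta_{L,y}(x+y)$; $\tau_L^2=\mathrm{Var}(\Phi_L(y))$; $\Xi_L=\xi_L+\Phi_L$; $a_L^\Xi=a_L\sqrt{1+\tau_L^2}$.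 Standing assumptions: $d_L\ll a_L$, $\tau_L\ll a_L^{-1}(a_L/d_L)^{1/2}$. $\theta=2d+1$. $\Theta^\xi_L(x)=a_L(\xi_L(x)-a_L)$, $\Theta^\Xi_L(x)=a_L(\Xi_L(x)-a^\Xi_L)$. $\mathcal{A}^\chi_{L,z}(s)=\bigcup_{x\ne y\in Q_{R_L,z}}\{\Theta^\chi_L(x)\ge-s,\ \Theta^\chi_L(y)\ge-s\}$. $w_{L,z}$ and $w^\Xi_{L,z}$ are the points of $Q_{R_L,z}$ where $\xi_L$, resp. $\Xi_L$, attains its maximum over $Q_{R_L,z}$. *)

theory Defs
  imports "HOL-Probability.Probability"
begin

text \<open>Points of the lattice Z^d are represented as int ^ 'd, with d = CARD('d).\<close>

definition znorm :: "int ^ 'd \<Rightarrow> real" where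
  "znorm x = sqrt (\<Sum>i\<in>UNIV. (real_of_int (x $ i))^2)"

definition Qbox0 :: "real \<Rightarrow> (int ^ 'd) set" where
  "Qbox0 s = {q. \<forall>i. - s / 2 \<le> real_of_int (q $ i) \<and> real_of_int (q $ i) \<le> s / 2}"

definition Qbox :: "real \<Rightarrow> int ^ 'd \<Rightarrow> (int ^ 'd) set" where
  "Qbox s z = (\<lambda>q. z + q) ` Qbox0 s"

definition lap :: "(int ^ 'd \<Rightarrow> real) \<Rightarrow> int ^ 'd \<Rightarrow> real" where
  "lap f x = (\<Sum>y\<in>{y. znorm (y - x) = 1}. f y - f x)"

text \<open>d_L defined by sup_{|x|=1} v_L(x) = 1 - 1/d_L.\<close>
definition dparam :: "(int ^ 'd \<Rightarrow> real) \<Rightarrow> real" where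
  "dparam w = 1 / (1 - Max {w x | x. znorm x = 1})"

text \<open>Centred Gaussian field with covariance function C: every finite linear
  combination is a centred normal variable (possibly degenerate) with the
  variance prescribed by C, expressed through its characteristic function.\<close>
definition gaussian_field :: "'a measure \<Rightarrow> ('i \<Rightarrow> 'a \<Rightarrow> real) \<Rightarrow> ('i \<Rightarrow> 'i \<Rightarrow> real) \<Rightarrow> bool" where
  "gaussian_field M X C \<longleftrightarrow>
     (\<forall>i. X i \<in> borel_measurable M) \<and>
     (\<forall>S c t. finite S \<longrightarrow>
        char (distr M borel (\<lambda>\<omega>. \<Sum>i\<in>S. c i * X i \<omega>)) t
        = complex_of_real (exp (- (t^2 * (\<Sum>i\<in>S. \<Sum>j\<in>S. c i * c j * C i j)) / 2)))"

definition dirichlet_eigenpair :: "(int ^ 'd \<Rightarrow> real) \<Rightarrow> (int ^ 'd) set \<Rightarrow> (int ^ 'd \<Rightarrow> real) \<Rightarrow> real \<Rightarrow> bool" where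
  "dirichlet_eigenpair V Q \<psi> \<mu> \<longleftrightarrow>
     (\<forall>x. x \<notin> Q \<longrightarrow> \<psi> x = 0) \<and> (\<exists>x. \<psi> x \<noteq> 0) \<and>
     (\<forall>x\<in>Q. lap \<psi> x - V x * \<psi> x = \<mu> * \<psi> x)"

definition principal_eigenfunction :: "(int ^ 'd \<Rightarrow> real) \<Rightarrow> (int ^ 'd) set \<Rightarrow> (int ^ 'd \<Rightarrow> real) \<Rightarrow> bool" where
  "principal_eigenfunction V Q \<phi> \<longleftrightarrow>
     (\<forall>x. 0 \<le> \<phi> x) \<and> (\<Sum>x\<in>Q. (\<phi> x)^2) = 1 \<and>
     (\<exists>lam. dirichlet_eigenpair V Q \<phi> lam \<and> (\<forall>\<psi> \<mu>. dirichlet_eigenpair V Q \<psi> \<mu> \<longrightarrow> \<mu> \<le> lam))"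

definition zeta :: "(int ^ 'd \<Rightarrow> 'a \<Rightarrow> real) \<Rightarrow> (int ^ 'd \<Rightarrow> real) \<Rightarrow> int ^ 'd \<Rightarrow> int ^ 'd \<Rightarrow> 'a \<Rightarrow> real" where
  "zeta \<xi> w x0 x \<omega> = \<xi> x \<omega> - \<xi> x0 \<omega> * w (x - x0)"

definition PhiF :: "(int ^ 'd \<Rightarrow> 'a \<Rightarrow> real) \<Rightarrow> (int ^ 'd \<Rightarrow> real) \<Rightarrow> (int ^ 'd \<Rightarrow> real) \<Rightarrow> real \<Rightarrow> int ^ 'd \<Rightarrow> 'a \<Rightarrow> real" where
  "PhiF \<xi> w \<phi> s y \<omega> = (\<Sum>x\<in>Qbox0 s - {0}. (\<phi> x)^2 * zeta \<xi> w y (x + y) \<omega>)"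

definition XiF :: "(int ^ 'd \<Rightarrow> 'a \<Rightarrow> real) \<Rightarrow> (int ^ 'd \<Rightarrow> real) \<Rightarrow> (int ^ 'd \<Rightarrow> real) \<Rightarrow> real \<Rightarrow> int ^ 'd \<Rightarrow> 'a \<Rightarrow> real" where
  "XiF \<xi> w \<phi> s x \<omega> = \<xi> x \<omega> + PhiF \<xi> w \<phi> s x \<omega>"

definition var :: "'a measure \<Rightarrow> ('a \<Rightarrow> real) \<Rightarrow> real" where
  "var M X = integral\<^sup>L M (\<lambda>\<omega>. (X \<omega> - integral\<^sup>L M X)^2)"

text \<open>tau_L = sqrt(Var(Phi_L(y))), taken at y = 0 (stationarity).\<close>
definition tauF :: "'a measure \<Rightarrow> (int ^ 'd \<Rightarrow> 'a \<Rightarrow> real) \<Rightarrow> (int ^ 'd \<Rightarrow> real) \<Rightarrow> (int ^ 'd \<Rightarrow> real) \<Rightarrow> real \<Rightarrow> real" where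
  "tauF M \<xi> w \<phi> s = sqrt (var M (PhiF \<xi> w \<phi> s 0))"

definition Theta :: "real \<Rightarrow> real \<Rightarrow> (int ^ 'd \<Rightarrow> 'a \<Rightarrow> real) \<Rightarrow> int ^ 'd \<Rightarrow> 'a \<Rightarrow> real" where
  "Theta a c f x \<omega> = a * (f x \<omega> - c)"

definition Aev :: "'a measure \<Rightarrow> (int ^ 'd) set \<Rightarrow> (int ^ 'd \<Rightarrow> 'a \<Rightarrow> real) \<Rightarrow> real \<Rightarrow> 'a set" where
  "Aev M Q \<Theta> s = {\<omega>\<in>space M. \<exists>x\<in>Q. \<exists>y\<in>Q. x \<noteq> y \<and> - s \<le> \<Theta> x \<omega> \<and> - s \<le> \<Theta> y \<omega>}"

end

theory Submission
  imports Defs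
begin

text \<open>
  Part (i) is deterministic. The principal eigenfunction has Dirichlet energy at most \<open>2d\<close>,
  i.e. \<open>a \<Sum>\<^sub>x \<phi>(x)\<^sup>2 (1 - v(x)) \<le> 2d\<close>, so writing
  \<open>\<Xi>(y) = (1 - \<Sum>\<^sub>x \<phi>(x)\<^sup>2 v(x)) \<xi>(y) + \<Sum>\<^sub>x \<phi>(x)\<^sup>2 \<xi>(x + y)\<close> shows
  \<open>\<Xi>(y) \<le> (a - \<theta>)(1 + 2d/a) < a - 1\<close> as soon as \<open>\<xi> \<le> a - \<theta>\<close> on \<open>Q\<^sub>R\<^sub>+\<^sub>r\<close>, whereas the
  threshold \<open>a\<^sup>\<Xi> - s/a\<close> exceeds \<open>a - 1\<close>.

  Parts (ii) and (iii) come from a single union bound. With \<open>q = c/d\<^sub>L\<close> and \<open>\<eta> = q a/256\<close>,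
  each of the three events forces two distinct sites of \<open>Q\<^sub>R\<close> with \<open>\<xi> \<ge> a - 2\<eta>\<close>, or a site
  with \<open>\<Phi> \<ge> \<eta>\<close>. A sum of two distinct values of \<open>\<xi>\<close> is centred Gaussian with variance at
  most \<open>4 - 2q\<close>, and \<open>\<Phi>(y)\<close> is centred Gaussian with variance \<open>\<tau>\<^sup>2 \<le> 1/(a d\<^sub>L)\<close>.
  Together with \<open>|Q\<^sub>R| \<le> (2R)\<^sup>d\<close> and \<open>L\<^sup>d \<le> \<surd>(2\<pi>) exp((a + 1)\<^sup>2/2)\<close>, which follows from
  \<open>P(\<xi>(0) > a) = L\<^sup>-\<^sup>d\<close>, the Gaussian tails bound \<open>(L/R)\<^sup>d\<close> times the probability by a
  constant times \<open>exp(-q a\<^sup>2/32)\<close>, and \<open>q a\<^sup>2 \<rightarrow> \<infinity>\<close>.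
\<close>

section \<open>Gaussian fields\<close>

lemma std_normal_distribution_tail_le:
  assumes "0 \<le> x"
  shows "measure std_normal_distribution {x..} \<le> exp (- x\<^sup>2 / 2)"
proof -
  have "emeasure std_normal_distribution {x..}
      = (\<integral>\<^sup>+t. ennreal (std_normal_density t) * indicator {x..} t \<partial>lborel)"
    by (simp add: emeasure_density)
  also have "\<dots> \<le> (\<integral>\<^sup>+t. ennreal (exp (- x\<^sup>2 / 2)) * ennreal (normal_density x 1 t) \<partial>lborel)"
  proof (rule nn_integral_mono)
    fix t
    show "ennreal (std_normal_density t) * indicator {x..} t
        \<le> ennreal (exp (- x\<^sup>2 / 2)) * ennreal (normal_density x 1 t)"
    proof (cases "x \<le> t")
      case True
      then have "- t\<^sup>2 / 2 \<le> - x\<^sup>2 / 2 + - (t - x)\<^sup>2 / 2"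
        using assms by (simp add: power2_eq_square algebra_simps mult_right_mono)
      then have "std_normal_density t \<le> exp (- x\<^sup>2 / 2) * normal_density x 1 t"
        by (simp add: normal_density_def std_normal_density_def divide_right_mono flip: exp_add)
      then show ?thesis
        using True by (simp add: ennreal_mult'[symmetric] ennreal_leI)
    qed simp
  qed
  also have "\<dots> = ennreal (exp (- x\<^sup>2 / 2))"
    by (simp add: nn_integral_cmult nn_integral_eq_integral)
  finally show ?thesis
    by (simp add: measure_def enn2real_leI)
qed

lemma std_normal_density_le_tail:
  assumes "0 \<le> x"
  shows "std_normal_density (x + 1) \<le> measure std_normal_distribution {x<..}"
proof -
  have "ennreal (std_normal_density (x + 1))
      = (\<integral>\<^sup>+t. ennreal (std_normal_density (x + 1)) * indicator {x<..x + 1} t \<partial>lborel)"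
    by (simp add: nn_integral_cmult_indicator)
  also have "\<dots> \<le> (\<integral>\<^sup>+t. ennreal (std_normal_density t) * indicator {x<..} t \<partial>lborel)"
  proof (rule nn_integral_mono)
    fix t
    show "ennreal (std_normal_density (x + 1)) * indicator {x<..x + 1} t
        \<le> ennreal (std_normal_density t) * indicator {x<..} t"
    proof (cases "x < t \<and> t \<le> x + 1")
      case True
      then have "t\<^sup>2 \<le> (x + 1)\<^sup>2"
        using assms by (intro power_mono) auto
      then show ?thesis
        using True by (simp add: std_normal_density_def divide_right_mono ennreal_leI)
    qed (auto simp: indicator_def)
  qed
  also have "\<dots> = emeasure std_normal_distribution {x<..}"
    by (simp add: emeasure_density)
  finally show ?thesis
    using real_dist_normal_dist by (simp add: real_distribution_def prob_space_def finite_measure.emeasure_eq_measure)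
qed

definition lincomb_variance :: "('i \<Rightarrow> 'i \<Rightarrow> real) \<Rightarrow> 'k set \<Rightarrow> ('k \<Rightarrow> 'i) \<Rightarrow> ('k \<Rightarrow> real) \<Rightarrow> real" where
  "lincomb_variance C I p b = (\<Sum>k\<in>I. \<Sum>l\<in>I. b k * b l * C (p k) (p l))"

lemma lincomb_variance_scale:
  "lincomb_variance C I p (\<lambda>k. t * b k) = t\<^sup>2 * lincomb_variance C I p b"
  unfolding lincomb_variance_def by (simp add: sum_distrib_left power2_eq_square algebra_simps)

lemma gaussian_field_measurable_lincomb:
  assumes "gaussian_field M X C"
  shows "(\<lambda>\<omega>. \<Sum>k\<in>I. b k * X (p k) \<omega>) \<in> borel_measurable M"
  using assms unfolding gaussian_field_def by (intro borel_measurable_sum borel_measurable_times) auto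

lemma gaussian_field_char_lincomb:
  assumes G: "gaussian_field M X C" and I: "finite I"
  shows "char (distr M borel (\<lambda>\<omega>. \<Sum>k\<in>I. b k * X (p k) \<omega>)) t
       = complex_of_real (exp (- (t\<^sup>2 * lincomb_variance C I p b) / 2))"
proof -
  define c where "c i = (\<Sum>k\<in>{k\<in>I. p k = i}. b k)" for i
  have regroup: "(\<Sum>k\<in>I. b k * f (p k)) = (\<Sum>i\<in>p ` I. c i * f i)" for f :: "_ \<Rightarrow> real"
    unfolding c_def sum_distrib_right using I by (auto simp: sum.image_gen[of I _ p] intro!: sum.cong)
  have "lincomb_variance C I p b = (\<Sum>k\<in>I. b k * (\<Sum>j\<in>p ` I. c j * C (p k) j))"
    unfolding lincomb_variance_def regroup[symmetric] by (simp add: sum_distrib_left mult.assoc)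
  also have "\<dots> = (\<Sum>i\<in>p ` I. c i * (\<Sum>j\<in>p ` I. c j * C i j))"
    by (rule regroup)
  also have "\<dots> = (\<Sum>i\<in>p ` I. \<Sum>j\<in>p ` I. c i * c j * C i j)"
    by (simp add: sum_distrib_left mult.assoc)
  finally have "lincomb_variance C I p b = (\<Sum>i\<in>p ` I. \<Sum>j\<in>p ` I. c i * c j * C i j)" .
  moreover have "(\<lambda>\<omega>. \<Sum>k\<in>I. b k * X (p k) \<omega>) = (\<lambda>\<omega>. \<Sum>i\<in>p ` I. c i * X i \<omega>)"
    using regroup[of "\<lambda>i. X i _"] by simp
  ultimately show ?thesis
    using G I unfolding gaussian_field_def by simp
qed

lemma var_nonneg: "0 \<le> var M X"
  unfolding var_def by (intro Bochner_Integration.integral_nonneg) simp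

lemma (in prob_space) prob_mono_subset: "A \<subseteq> B \<Longrightarrow> B \<in> events \<Longrightarrow> prob A \<le> prob B"
  by (cases "A \<in> events") (auto intro: finite_measure_mono simp: measure_notin_sets)

locale centred_gaussian_field = prob_space M
  for M :: "'a measure" +
  fixes X :: "'i \<Rightarrow> 'a \<Rightarrow> real" and C :: "'i \<Rightarrow> 'i \<Rightarrow> real"
  assumes gaussian: "gaussian_field M X C"
begin

lemma measurable_lincomb [measurable]: "(\<lambda>\<omega>. \<Sum>k\<in>I. b k * X (p k) \<omega>) \<in> borel_measurable M"
  by (rule gaussian_field_measurable_lincomb[OF gaussian])

lemma lincomb_variance_nonneg:
  assumes "finite I"
  shows "0 \<le> lincomb_variance C I p b"
proof -
  have "norm (char (distr M borel (\<lambda>\<omega>. \<Sum>k\<in>I. b k * X (p k) \<omega>)) 1) \<le> 1"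
    by (rule real_distribution.cmod_char_le_1, rule real_distribution_distr) simp
  then show ?thesis
    by (simp add: gaussian_field_char_lincomb[OF gaussian assms])
qed

lemma distr_lincomb_eqI:
  assumes "finite I" and "real_distribution N"
    and "\<And>t. char N t = complex_of_real (exp (- (t\<^sup>2 * lincomb_variance C I p b) / 2))"
  shows "distr M borel (\<lambda>\<omega>. \<Sum>k\<in>I. b k * X (p k) \<omega>) = N"
proof (rule Levy_uniqueness)
  show "char (distr M borel (\<lambda>\<omega>. \<Sum>k\<in>I. b k * X (p k) \<omega>)) = char N"
    by (rule ext) (simp add: gaussian_field_char_lincomb[OF gaussian] assms)
qed (simp_all add: assms)

lemma distr_lincomb_std_normal:
  assumes "finite I" and "lincomb_variance C I p b = 1"
  shows "distr M borel (\<lambda>\<omega>. \<Sum>k\<in>I. b k * X (p k) \<omega>) = std_normal_distribution"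
  using assms by (intro distr_lincomb_eqI real_dist_normal_dist) (simp_all add: char_std_normal_distribution)

lemma distr_lincomb_degenerate:
  assumes "finite I" and "lincomb_variance C I p b = 0"
  shows "distr M borel (\<lambda>\<omega>. \<Sum>k\<in>I. b k * X (p k) \<omega>) = return borel 0"
proof (rule distr_lincomb_eqI[OF assms(1)])
  show "real_distribution (return borel (0::real))"
    by (simp add: real_distribution_def real_distribution_axioms_def prob_space_return)
  show "char (return borel 0) t = complex_of_real (exp (- (t\<^sup>2 * lincomb_variance C I p b) / 2))" for t
    using assms(2) by (simp add: char_def integral_return)
qed

lemma lincomb_normalised:
  assumes "finite I" and "0 < lincomb_variance C I p b"
  obtains Z where "Z \<in> borel_measurable M" and "distr M borel Z = std_normal_distribution"
    and "\<And>\<omega>. (\<Sum>k\<in>I. b k * X (p k) \<omega>) = sqrt (lincomb_variance C I p b) * Z \<omega>"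
proof
  let ?s = "sqrt (lincomb_variance C I p b)"
  have "lincomb_variance C I p (\<lambda>k. (1 / ?s) * b k) = 1"
    using assms(2) unfolding lincomb_variance_scale by (simp add: power_divide)
  then show "distr M borel (\<lambda>\<omega>. \<Sum>k\<in>I. (1 / ?s * b k) * X (p k) \<omega>) = std_normal_distribution"
    by (rule distr_lincomb_std_normal[OF assms(1)])
  show "(\<Sum>k\<in>I. b k * X (p k) \<omega>) = ?s * (\<Sum>k\<in>I. (1 / ?s * b k) * X (p k) \<omega>)" for \<omega>
    using assms(2) by (simp add: sum_distrib_left)
qed (rule measurable_lincomb)

lemma prob_lincomb_ge_le:
  assumes I: "finite I" and y: "0 \<le> y"
    and q: "lincomb_variance C I p b \<le> \<sigma>2" and \<sigma>2: "0 < \<sigma>2"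
  shows "prob {\<omega>\<in>space M. y \<le> (\<Sum>k\<in>I. b k * X (p k) \<omega>)} \<le> exp (- y\<^sup>2 / (2 * \<sigma>2))"
proof -
  let ?Y = "\<lambda>\<omega>. \<Sum>k\<in>I. b k * X (p k) \<omega>"
  define q where "q = lincomb_variance C I p b"
  have prob_distr: "prob {\<omega>\<in>space M. t \<le> Z \<omega>} = measure (distr M borel Z) {t..}"
    if "Z \<in> borel_measurable M" for Z :: "'a \<Rightarrow> real" and t
    using that by (subst measure_distr) (auto intro: arg_cong[where f=prob])
  consider "q = 0" | "0 < q"
    using lincomb_variance_nonneg[OF I, of p b] unfolding q_def by fastforce
  then show ?thesis
  proof cases
    case 1
    then have "prob {\<omega>\<in>space M. y \<le> ?Y \<omega>} = measure (return borel 0) {y..}"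
      using distr_lincomb_degenerate[OF I] prob_distr[of ?Y y] unfolding q_def by simp
    then show ?thesis
      by (cases "y = 0") (use y in \<open>simp_all add: measure_return\<close>)
  next
    case 2
    obtain Z where Z: "Z \<in> borel_measurable M" "distr M borel Z = std_normal_distribution"
      and Y: "\<And>\<omega>. ?Y \<omega> = sqrt q * Z \<omega>"
      using lincomb_normalised[OF I 2[unfolded q_def]] unfolding q_def by metis
    have "prob {\<omega>\<in>space M. y \<le> ?Y \<omega>} = prob {\<omega>\<in>space M. y / sqrt q \<le> Z \<omega>}"
      using 2 by (simp add: Y divide_le_eq mult.commute)
    also have "\<dots> = measure std_normal_distribution {y / sqrt q..}"
      using prob_distr[OF Z(1)] Z(2) by simp
    also have "\<dots> \<le> exp (- (y / sqrt q)\<^sup>2 / 2)"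
      using y 2 by (intro std_normal_distribution_tail_le) simp
    also have "\<dots> \<le> exp (- y\<^sup>2 / (2 * \<sigma>2))"
      using 2 q unfolding q_def[symmetric] by (simp add: power_divide frac_le)
    finally show ?thesis .
  qed
qed

lemma std_normal_density_le_prob_lincomb_gt:
  assumes "finite I" and "lincomb_variance C I p b = 1" and "0 \<le> x"
  shows "std_normal_density (x + 1) \<le> prob {\<omega>\<in>space M. x < (\<Sum>k\<in>I. b k * X (p k) \<omega>)}"
proof -
  have "prob {\<omega>\<in>space M. x < (\<Sum>k\<in>I. b k * X (p k) \<omega>)}
      = measure (distr M borel (\<lambda>\<omega>. \<Sum>k\<in>I. b k * X (p k) \<omega>)) {x<..}"
    by (subst measure_distr) (auto intro: arg_cong[where f=prob])
  then show ?thesis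
    using distr_lincomb_std_normal[OF assms(1,2)] std_normal_density_le_tail[OF assms(3)] by simp
qed

lemma var_lincomb:
  assumes I: "finite I"
  shows "var M (\<lambda>\<omega>. \<Sum>k\<in>I. b k * X (p k) \<omega>) = lincomb_variance C I p b"
proof -
  let ?Y = "\<lambda>\<omega>. \<Sum>k\<in>I. b k * X (p k) \<omega>"
  define q where "q = lincomb_variance C I p b"
  have moment: "integral\<^sup>L M (\<lambda>\<omega>. (Z \<omega>) ^ n) = integral\<^sup>L (distr M borel Z) (\<lambda>x. x ^ n)"
    if "Z \<in> borel_measurable M" for Z :: "'a \<Rightarrow> real" and n
    using that by (simp add: integral_distr)
  consider "q = 0" | "0 < q"
    using lincomb_variance_nonneg[OF I, of p b] unfolding q_def by fastforce
  then show ?thesis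
  proof cases
    case 1
    then have "integral\<^sup>L M (\<lambda>\<omega>. (?Y \<omega>) ^ n) = 0" if "0 < n" for n
      using that moment[of ?Y n] distr_lincomb_degenerate[OF I] unfolding q_def
      by (simp add: integral_return)
    from this[of 1] this[of 2] 1 show ?thesis
      unfolding var_def q_def by simp
  next
    case 2
    obtain Z where Z: "Z \<in> borel_measurable M" "distr M borel Z = std_normal_distribution"
      and Y: "\<And>\<omega>. ?Y \<omega> = sqrt q * Z \<omega>"
      using lincomb_normalised[OF I 2[unfolded q_def]] unfolding q_def by metis
    have "integral\<^sup>L M Z = 0"
      using moment[OF Z(1), of 1] Z(2) integral_std_normal_distribution_moment_odd[of 1] by simp
    moreover have "integral\<^sup>L M (\<lambda>\<omega>. (Z \<omega>)\<^sup>2) = 1"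
      using moment[OF Z(1), of 2] Z(2) std_normal_distribution_even_moments(1)[of 1] by simp
    ultimately show ?thesis
      using 2 unfolding var_def Y q_def[symmetric] by (simp add: power_mult_distrib)
  qed
qed

end

section \<open>Lattice boxes and the discrete Laplacian\<close>

lemma vec_components_in_eq_image:
  "{x::'a^'n. \<forall>i. x $ i \<in> A} = vec_lambda ` (UNIV \<rightarrow>\<^sub>E A)"
proof (intro equalityI subsetI)
  fix x :: "'a^'n"
  assume "x \<in> {x. \<forall>i. x $ i \<in> A}"
  then have "vec_nth x \<in> UNIV \<rightarrow>\<^sub>E A"
    by auto
  then show "x \<in> vec_lambda ` (UNIV \<rightarrow>\<^sub>E A)"
    by (metis image_eqI vec_lambda_eta)
qed auto

lemma card_vec_components_in:
  assumes "finite A"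
  shows "card {x::'a^'n. \<forall>i. x $ i \<in> A} = card A ^ CARD('n)"
proof -
  have "inj_on vec_lambda (UNIV \<rightarrow>\<^sub>E A :: ('n \<Rightarrow> 'a) set)"
    by (auto simp: inj_on_def vec_lambda_inject)
  then show ?thesis
    by (simp add: vec_components_in_eq_image card_image card_PiE)
qed

lemma finite_vec_components_in:
  "finite A \<Longrightarrow> finite {x::'a^'n. \<forall>i. x $ i \<in> A}"
  unfolding vec_components_in_eq_image by (intro finite_imageI finite_PiE) auto

lemma mem_Qbox0_iff: "x \<in> Qbox0 s \<longleftrightarrow> (\<forall>i. \<bar>real_of_int (x $ i)\<bar> \<le> s / 2)"
  unfolding Qbox0_def mem_Collect_eq by (intro iff_allI) (auto simp: abs_le_iff)

lemma Qbox0_subset_cube: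
  "Qbox0 s \<subseteq> {x::int^'d. \<forall>i. x $ i \<in> {- \<lfloor>s / 2\<rfloor>..\<lfloor>s / 2\<rfloor>}}"
proof (intro subsetI CollectI allI)
  fix x :: "int^'d" and i
  assume "x \<in> Qbox0 s"
  then have "\<bar>real_of_int (x $ i)\<bar> \<le> s / 2"
    by (simp add: mem_Qbox0_iff)
  then show "x $ i \<in> {- \<lfloor>s / 2\<rfloor>..\<lfloor>s / 2\<rfloor>}"
    by (simp add: abs_le_iff le_floor_iff) linarith
qed

lemma finite_Qbox0 [simp]: "finite (Qbox0 s :: (int^'d) set)"
  by (rule finite_subset[OF Qbox0_subset_cube finite_vec_components_in]) simp

lemma finite_Qbox [simp]: "finite (Qbox s z :: (int^'d) set)"
  unfolding Qbox_def by simp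

lemma card_Qbox0_le:
  assumes "0 \<le> s"
  shows "real (card (Qbox0 s :: (int^'d) set)) \<le> (s + 1) ^ CARD('d)"
proof -
  let ?m = "\<lfloor>s / 2\<rfloor>"
  have "card (Qbox0 s :: (int^'d) set) \<le> card {x::int^'d. \<forall>i. x $ i \<in> {- ?m..?m}}"
    by (rule card_mono[OF finite_vec_components_in Qbox0_subset_cube]) simp
  also have "\<dots> = nat (2 * ?m + 1) ^ CARD('d)"
    by (subst card_vec_components_in) auto
  finally have "real (card (Qbox0 s :: (int^'d) set)) \<le> real (nat (2 * ?m + 1)) ^ CARD('d)"
    by (metis of_nat_le_iff of_nat_power)
  also have "\<dots> \<le> (s + 1) ^ CARD('d)"
    using assms by (intro power_mono) linarith+
  finally show ?thesis .
qed

lemma card_Qbox_le: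
  assumes "0 \<le> s"
  shows "real (card (Qbox s z :: (int^'d) set)) \<le> (s + 1) ^ CARD('d)"
  using card_image_le[OF finite_Qbox0, of "\<lambda>q. z + q" s] card_Qbox0_le[OF assms, where 'd='d]
  unfolding Qbox_def by linarith

lemma mem_Qbox_iff: "x \<in> Qbox s z \<longleftrightarrow> x - z \<in> Qbox0 s"
  unfolding Qbox_def by (auto simp: image_iff) (metis add.commute diff_add_cancel)

lemma zero_mem_Qbox0: "0 \<le> s \<Longrightarrow> 0 \<in> Qbox0 s"
  unfolding Qbox0_def by auto

lemma Qbox_subset_singleton:
  assumes "s < 1"
  shows "Qbox s z \<subseteq> {z}"
proof -
  have "x = 0" if "x \<in> Qbox0 s" for x :: "int^'d"
  proof -
    have x: "\<bar>real_of_int (x $ i)\<bar> \<le> s / 2" for i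
      using that unfolding mem_Qbox0_iff by blast
    have "\<bar>real_of_int (x $ i)\<bar> < 1" for i
      using x[of i] assms by linarith
    then show ?thesis
      by (simp add: vec_eq_iff flip: of_int_abs)
  qed
  then show ?thesis
    unfolding Qbox_def by auto
qed

lemma add_mem_Qbox:
  assumes "y \<in> Qbox R z" and "w \<in> Qbox0 r"
  shows "y + w \<in> Qbox (R + r) z"
proof -
  have yz: "\<bar>real_of_int ((y - z) $ i)\<bar> \<le> R / 2" and w: "\<bar>real_of_int (w $ i)\<bar> \<le> r / 2" for i
    using assms unfolding mem_Qbox_iff mem_Qbox0_iff by blast+
  have "\<bar>real_of_int ((y + w - z) $ i)\<bar> \<le> (R + r) / 2" for i
    using yz[of i] w[of i] abs_triangle_ineq[of "real_of_int ((y - z) $ i)" "real_of_int (w $ i)"]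
    by (simp add: algebra_simps)
  then show ?thesis
    by (simp add: mem_Qbox_iff mem_Qbox0_iff)
qed

lemma Qbox0_abs_mono:
  assumes "x \<in> Qbox0 r" and "\<And>j. \<bar>y $ j\<bar> \<le> \<bar>x $ j\<bar>"
  shows "y \<in> Qbox0 r"
  using assms unfolding mem_Qbox0_iff by (metis of_int_abs of_int_le_iff order.trans)

definition unit_steps :: "(int^'d) set" where
  "unit_steps = {e. znorm e = 1}"

lemma znorm_eq_1_iff: "znorm e = 1 \<longleftrightarrow> (\<Sum>i\<in>UNIV. (e $ i)\<^sup>2) = (1::int)"
proof -
  have "znorm e = 1 \<longleftrightarrow> real_of_int (\<Sum>i\<in>UNIV. (e $ i)\<^sup>2) = 1"
    unfolding znorm_def by (simp add: sum_nonneg)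
  then show ?thesis
    by linarith
qed

lemma znorm_eq_1_iff_axis: "znorm e = 1 \<longleftrightarrow> (\<exists>i s. s \<in> {-1, 1} \<and> e = axis i s)"
proof
  assume "znorm e = 1"
  then have sum: "(\<Sum>j\<in>UNIV. (e $ j)\<^sup>2) = 1"
    by (simp add: znorm_eq_1_iff)
  then obtain i where i: "e $ i \<noteq> 0"
    by (metis (no_types, lifting) power_zero_numeral sum.neutral zero_neq_one)
  have split: "(\<Sum>j\<in>UNIV. (e $ j)\<^sup>2) = (e $ i)\<^sup>2 + (\<Sum>j\<in>UNIV - {i}. (e $ j)\<^sup>2)"
    by (simp add: sum.remove)
  have "0 < (e $ i)\<^sup>2"
    using i by simp
  then have "1 \<le> (e $ i)\<^sup>2"
    by linarith
  moreover have "0 \<le> (\<Sum>j\<in>UNIV - {i}. (e $ j)\<^sup>2)"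
    by (simp add: sum_nonneg)
  ultimately have "(e $ i)\<^sup>2 = 1" and rest: "(\<Sum>j\<in>UNIV - {i}. (e $ j)\<^sup>2) = 0"
    using sum split by linarith+
  have "e $ j = 0" if "j \<noteq> i" for j
    using rest that by (simp add: sum_nonneg_eq_0_iff)
  then have "e = axis i (e $ i)"
    by (auto simp: axis_def vec_eq_iff)
  moreover have "e $ i \<in> {-1, 1}"
    using \<open>(e $ i)\<^sup>2 = 1\<close> by (auto simp: power2_eq_1_iff)
  ultimately show "\<exists>i s. s \<in> {-1, 1} \<and> e = axis i s"
    by blast
next
  assume "\<exists>i s. s \<in> {-1, 1} \<and> e = axis i s"
  then obtain i and s :: int where "s \<in> {-1, 1}" and "e = axis i s"
    by blast
  moreover have "(\<Sum>j\<in>UNIV. (axis i s $ j)\<^sup>2) = s\<^sup>2"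
    by (simp add: axis_def if_distrib[of "\<lambda>x. x\<^sup>2"] cong: if_cong)
  ultimately show "znorm e = 1"
    by (auto simp: znorm_eq_1_iff)
qed

lemma unit_steps_eq_axis_image:
  "unit_steps = (\<lambda>(i, s). axis i s) ` (UNIV \<times> {-1, 1::int})"
  unfolding unit_steps_def znorm_eq_1_iff_axis by auto

lemma finite_unit_steps [simp]: "finite (unit_steps :: (int^'d) set)"
  unfolding unit_steps_eq_axis_image by simp

lemma card_unit_steps_le: "card (unit_steps :: (int^'d) set) \<le> 2 * CARD('d)"
  unfolding unit_steps_eq_axis_image
  using card_image_le[of "UNIV \<times> {-1, 1::int}" "\<lambda>(i, s). axis i s :: int^'d"]
  by (simp add: card_cartesian_product)

lemma axis_mem_unit_steps: "s \<in> {-1, 1} \<Longrightarrow> axis i s \<in> unit_steps"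
  unfolding unit_steps_def znorm_eq_1_iff_axis by blast

lemma lap_eq_sum_unit_steps: "lap f x = (\<Sum>e\<in>unit_steps. f (x + e) - f x)"
proof -
  have "{y. znorm (y - x) = 1} = (\<lambda>e. x + e) ` unit_steps"
    unfolding unit_steps_def by (auto simp: image_iff) (metis add.commute diff_add_cancel)
  then show ?thesis
    unfolding lap_def by (simp add: sum.reindex inj_on_def)
qed

lemma exists_far_point: "\<exists>x::int^'d. x \<noteq> 0 \<and> K \<le> znorm x"
proof -
  define k where "k = \<lceil>max K 1\<rceil>"
  have "1 \<le> k" and "K \<le> real_of_int k"
    unfolding k_def by linarith+
  have "real_of_int k = sqrt ((real_of_int k)\<^sup>2)"
    using \<open>1 \<le> k\<close> by simp
  also have "\<dots> \<le> sqrt (real CARD('d) * (real_of_int k)\<^sup>2)"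
    by (intro real_sqrt_le_mono) (simp add: mult_le_cancel_right1)
  also have "\<dots> = znorm (\<chi> i::'d. k)"
    by (simp add: znorm_def)
  finally show ?thesis
    using \<open>1 \<le> k\<close> \<open>K \<le> real_of_int k\<close> by (intro exI[of _ "\<chi> i. k"]) (auto simp: vec_eq_iff)
qed

lemma Qbox0_step_towards_zero:
  fixes x :: "int^'d"
  assumes "x \<in> Qbox0 r" and "x \<noteq> 0"
  obtains y e where "y \<in> Qbox0 r" and "e \<in> unit_steps" and "x = y + e"
    and "(\<Sum>j\<in>UNIV. nat \<bar>y $ j\<bar>) < (\<Sum>j\<in>UNIV. nat \<bar>x $ j\<bar>)"
proof -
  obtain i where i: "x $ i \<noteq> 0"
    using assms(2) by (auto simp: vec_eq_iff)
  define e where "e = axis i (sgn (x $ i))"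
  have y_i: "\<bar>(x - e) $ i\<bar> = \<bar>x $ i\<bar> - 1" and y_j: "j \<noteq> i \<Longrightarrow> (x - e) $ j = x $ j" for j
    using i by (auto simp: e_def axis_def sgn_if)
  have "\<bar>(x - e) $ j\<bar> \<le> \<bar>x $ j\<bar>" for j
    using y_i y_j[of j] by (cases "j = i") auto
  then have "x - e \<in> Qbox0 r"
    by (rule Qbox0_abs_mono[OF assms(1)])
  moreover have "e \<in> unit_steps"
    using i unfolding e_def by (intro axis_mem_unit_steps) (auto simp: sgn_if)
  moreover have "(\<Sum>j\<in>UNIV. nat \<bar>(x - e) $ j\<bar>) < (\<Sum>j\<in>UNIV. nat \<bar>x $ j\<bar>)"
  proof (rule sum_strict_mono_ex1)
    show "\<forall>j\<in>UNIV. nat \<bar>(x - e) $ j\<bar> \<le> nat \<bar>x $ j\<bar>"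
      using \<open>\<And>j. \<bar>(x - e) $ j\<bar> \<le> \<bar>x $ j\<bar>\<close> by (simp add: nat_mono)
    show "\<exists>j\<in>UNIV. nat \<bar>(x - e) $ j\<bar> < nat \<bar>x $ j\<bar>"
      using i y_i by (intro bexI[of _ i]) auto
  qed simp
  ultimately show ?thesis
    by (intro that[of "x - e" e]) auto
qed

lemma Qbox0_induct [consumes 1, case_names zero step]:
  fixes x :: "int^'d"
  assumes "x \<in> Qbox0 r" and zero: "P 0"
    and step: "\<And>y e. y \<in> Qbox0 r \<Longrightarrow> e \<in> unit_steps \<Longrightarrow> P y \<Longrightarrow> P (y + e)"
  shows "P x"
  using assms(1)
proof (induction "\<Sum>j\<in>UNIV. nat \<bar>x $ j\<bar>" arbitrary: x rule: less_induct)
  case less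
  show ?case
  proof (cases "x = 0")
    case True
    then show ?thesis
      using zero by simp
  next
    case False
    then obtain y e where "y \<in> Qbox0 r" "e \<in> unit_steps" "x = y + e"
      and "(\<Sum>j\<in>UNIV. nat \<bar>y $ j\<bar>) < (\<Sum>j\<in>UNIV. nat \<bar>x $ j\<bar>)"
      using Qbox0_step_towards_zero[OF less.prems] by blast
    then show ?thesis
      using less.hyps step by blast
  qed
qed

section \<open>Dirichlet eigenfunctions\<close>

lemma sum_shift_sq_le:
  fixes \<phi> :: "int^'d \<Rightarrow> real"
  assumes "\<forall>x. x \<notin> Q \<longrightarrow> \<phi> x = 0" and "finite Q"
  shows "(\<Sum>x\<in>Q. (\<phi> (x + e))\<^sup>2) \<le> (\<Sum>x\<in>Q. (\<phi> x)\<^sup>2)"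
proof -
  let ?A = "(\<lambda>x. x + e) ` Q"
  have "(\<Sum>x\<in>Q. (\<phi> (x + e))\<^sup>2) = (\<Sum>y\<in>?A. (\<phi> y)\<^sup>2)"
    by (simp add: sum.reindex inj_on_def)
  also have "\<dots> = (\<Sum>y\<in>?A \<inter> Q. (\<phi> y)\<^sup>2) + (\<Sum>y\<in>?A - Q. (\<phi> y)\<^sup>2)"
    using assms(2) by (simp add: sum.Int_Diff)
  also have "\<dots> \<le> (\<Sum>y\<in>Q. (\<phi> y)\<^sup>2)"
    using assms by (simp add: sum_mono2)
  finally show ?thesis .
qed

lemma dirichlet_form_nonpos:
  fixes \<phi> :: "int^'d \<Rightarrow> real"
  assumes "\<forall>x. x \<notin> Q \<longrightarrow> \<phi> x = 0" and "finite Q"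
  shows "(\<Sum>x\<in>Q. \<phi> x * lap \<phi> x) \<le> 0"
proof -
  have cross: "(\<Sum>x\<in>Q. \<phi> x * \<phi> (x + e)) \<le> (\<Sum>x\<in>Q. (\<phi> x)\<^sup>2)" for e
  proof -
    have "(\<Sum>x\<in>Q. \<phi> x * \<phi> (x + e)) \<le> (\<Sum>x\<in>Q. ((\<phi> x)\<^sup>2 + (\<phi> (x + e))\<^sup>2) / 2)"
    proof (rule sum_mono)
      fix x
      have "0 \<le> (\<phi> x - \<phi> (x + e))\<^sup>2"
        by simp
      then show "\<phi> x * \<phi> (x + e) \<le> ((\<phi> x)\<^sup>2 + (\<phi> (x + e))\<^sup>2) / 2"
        by (simp add: power2_diff)
    qed
    also have "\<dots> \<le> (\<Sum>x\<in>Q. (\<phi> x)\<^sup>2)"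
      using sum_shift_sq_le[OF assms, of e] by (simp add: sum.distrib flip: sum_divide_distrib)
    finally show ?thesis .
  qed
  have "(\<Sum>e\<in>unit_steps. \<Sum>x\<in>Q. \<phi> x * \<phi> (x + e) - (\<phi> x)\<^sup>2) \<le> 0"
    by (rule sum_nonpos) (use cross in \<open>simp add: sum_subtractf\<close>)
  moreover have "(\<Sum>x\<in>Q. \<phi> x * lap \<phi> x) = (\<Sum>e\<in>unit_steps. \<Sum>x\<in>Q. \<phi> x * \<phi> (x + e) - (\<phi> x)\<^sup>2)"
    unfolding lap_eq_sum_unit_steps sum_distrib_left
    by (subst sum.swap) (simp add: algebra_simps power2_eq_square)
  ultimately show ?thesis
    by simp
qed

lemma dirichlet_eigenfunction_pos_at_zero:
  fixes \<phi> :: "int^'d \<Rightarrow> real"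
  assumes ep: "dirichlet_eigenpair V (Qbox0 r) \<phi> \<mu>" and nonneg: "\<forall>x. 0 \<le> \<phi> x"
  shows "0 < \<phi> 0"
proof (rule ccontr)
  assume "\<not> 0 < \<phi> 0"
  then have "\<phi> 0 = 0"
    using nonneg by (simp add: order_less_le)
  have "\<phi> x = 0" if "x \<in> Qbox0 r" for x
    using that
  proof (induction rule: Qbox0_induct)
    case zero
    show ?case
      by (fact \<open>\<phi> 0 = 0\<close>)
  next
    case (step y e)
    have "lap \<phi> y = 0"
      using ep step(1,3) unfolding dirichlet_eigenpair_def by force
    then have "(\<Sum>e\<in>unit_steps. \<phi> (y + e)) = 0"
      using step(3) by (simp add: lap_eq_sum_unit_steps)
    then show ?case
      using step(2) nonneg by (simp add: sum_nonneg_eq_0_iff)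
  qed
  then show False
    using ep unfolding dirichlet_eigenpair_def by blast
qed

lemma dirichlet_eigenfunction_energy_le:
  fixes \<phi> :: "int^'d \<Rightarrow> real"
  assumes ep: "dirichlet_eigenpair V (Qbox0 r) \<phi> \<mu>" and nonneg: "\<forall>x. 0 \<le> \<phi> x"
    and norm: "(\<Sum>x\<in>Qbox0 r. (\<phi> x)\<^sup>2) = 1" and "V 0 = 0"
  shows "(\<Sum>x\<in>Qbox0 r. (\<phi> x)\<^sup>2 * V x) \<le> 2 * real CARD('d)"
proof -
  let ?Q = "Qbox0 r :: (int^'d) set"
  have outside: "\<forall>x. x \<notin> ?Q \<longrightarrow> \<phi> x = 0" and eq: "\<forall>x\<in>?Q. lap \<phi> x - V x * \<phi> x = \<mu> * \<phi> x"
    using ep unfolding dirichlet_eigenpair_def by blast+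
  have "0 < \<phi> 0"
    by (rule dirichlet_eigenfunction_pos_at_zero[OF ep nonneg])
  then have "0 \<in> ?Q"
    using outside by force
  have "- real (card (unit_steps :: (int^'d) set)) * \<phi> 0 \<le> lap \<phi> 0"
  proof -
    have "0 \<le> (\<Sum>e\<in>unit_steps. \<phi> (0 + e))"
      by (rule sum_nonneg) (simp add: nonneg)
    then show ?thesis
      unfolding lap_eq_sum_unit_steps by (simp add: sum_subtractf)
  qed
  also have "lap \<phi> 0 = \<mu> * \<phi> 0"
    using eq \<open>0 \<in> ?Q\<close> \<open>V 0 = 0\<close> by force
  finally have "- real (card (unit_steps :: (int^'d) set)) \<le> \<mu>"
    using \<open>0 < \<phi> 0\<close> by (rule mult_right_le_imp_le)
  then have "- 2 * real CARD('d) \<le> \<mu>"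
    using card_unit_steps_le[where 'd='d] by linarith
  moreover have "(\<Sum>x\<in>?Q. \<phi> x * lap \<phi> x) = \<mu> + (\<Sum>x\<in>?Q. (\<phi> x)\<^sup>2 * V x)"
  proof -
    have "(\<Sum>x\<in>?Q. \<phi> x * lap \<phi> x) = (\<Sum>x\<in>?Q. \<mu> * (\<phi> x)\<^sup>2 + (\<phi> x)\<^sup>2 * V x)"
      using eq by (intro sum.cong) (simp_all add: power2_eq_square algebra_simps)
    then show ?thesis
      using norm by (simp add: sum.distrib flip: sum_distrib_left)
  qed
  moreover have "(\<Sum>x\<in>?Q. \<phi> x * lap \<phi> x) \<le> 0"
    using outside by (intro dirichlet_form_nonpos) simp_all
  ultimately show ?thesis
    by linarith
qed

section \<open>Deterministic estimates\<close>

definition PhiF_coeff :: "(int^'d \<Rightarrow> real) \<Rightarrow> (int^'d \<Rightarrow> real) \<Rightarrow> real \<Rightarrow> int^'d \<Rightarrow> real" where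
  "PhiF_coeff w \<phi> s k = (if k = 0 then - (\<Sum>x\<in>Qbox0 s - {0}. (\<phi> x)\<^sup>2 * w x) else (\<phi> k)\<^sup>2)"

lemma PhiF_eq_lincomb:
  assumes "0 \<le> s"
  shows "PhiF \<xi> w \<phi> s y \<omega> = (\<Sum>k\<in>Qbox0 s. PhiF_coeff w \<phi> s k * \<xi> (k + y) \<omega>)"
proof -
  have "(\<Sum>k\<in>Qbox0 s. PhiF_coeff w \<phi> s k * \<xi> (k + y) \<omega>)
      = PhiF_coeff w \<phi> s 0 * \<xi> y \<omega> + (\<Sum>k\<in>Qbox0 s - {0}. (\<phi> k)\<^sup>2 * \<xi> (k + y) \<omega>)"
    using assms by (simp add: sum.remove[OF finite_Qbox0 zero_mem_Qbox0] PhiF_coeff_def)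
  also have "\<dots> = PhiF \<xi> w \<phi> s y \<omega>"
    by (simp add: PhiF_coeff_def PhiF_def zeta_def sum_distrib_left sum_distrib_right sum_subtractf
        algebra_simps)
  finally show ?thesis ..
qed

lemma bound_times_one_plus_le:
  fixes a \<kappa> E m :: real
  assumes "0 < a" and "0 \<le> E" and "a * E \<le> \<kappa>" and "m \<le> a - (\<kappa> + 1)" and "\<kappa> + 1 \<le> a"
  shows "m * (1 + E) \<le> a - 1"
proof -
  have "0 \<le> \<kappa>"
    using assms(1-3) mult_nonneg_nonneg[of a E] by linarith
  have "m * (1 + E) \<le> (a - (\<kappa> + 1)) * (1 + \<kappa> / a)"
    using assms by (intro mult_mono) (auto simp: field_simps)
  also have "\<dots> = a - 1 - \<kappa> * (\<kappa> + 1) / a"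
    using assms(1) by (simp add: field_simps)
  also have "\<dots> \<le> a - 1"
    using \<open>0 \<le> \<kappa>\<close> assms(1) by simp
  finally show ?thesis .
qed

lemma XiF_eq_weighted_sum:
  "XiF \<xi> w \<phi> s y \<omega>
    = \<xi> y \<omega> * (1 - (\<Sum>x\<in>Qbox0 s - {0}. (\<phi> x)\<^sup>2 * w x)) + (\<Sum>x\<in>Qbox0 s - {0}. (\<phi> x)\<^sup>2 * \<xi> (x + y) \<omega>)"
  by (simp add: XiF_def PhiF_def zeta_def algebra_simps sum_subtractf sum_distrib_left sum_distrib_right)

lemma XiF_le_of_local_bound:
  fixes \<xi> :: "int^'d \<Rightarrow> 'a \<Rightarrow> real"
  assumes "0 < a" and "0 \<le> s"
    and w_le: "\<And>x. w x \<le> 1"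
    and mass: "(\<Sum>x\<in>Qbox0 s - {0}. (\<phi> x)\<^sup>2) \<le> 1"
    and energy: "a * (\<Sum>x\<in>Qbox0 s - {0}. (\<phi> x)\<^sup>2 * (1 - w x)) \<le> \<kappa>"
    and local_max: "\<And>x. x \<in> Qbox0 s \<Longrightarrow> \<xi> (x + y) \<omega> \<le> m"
    and m: "m \<le> a - (\<kappa> + 1)" and "\<kappa> + 1 \<le> a"
  shows "XiF \<xi> w \<phi> s y \<omega> \<le> a - 1"
proof -
  let ?W = "Qbox0 s - {0} :: (int^'d) set"
  define P where "P = (\<Sum>x\<in>?W. (\<phi> x)\<^sup>2)"
  define S where "S = (\<Sum>x\<in>?W. (\<phi> x)\<^sup>2 * w x)"
  define E where "E = (\<Sum>x\<in>?W. (\<phi> x)\<^sup>2 * (1 - w x))"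
  have E_eq: "E = P - S"
    by (simp add: E_def P_def S_def algebra_simps sum_subtractf)
  have "0 \<le> E"
    unfolding E_def using w_le by (intro sum_nonneg) simp
  have "\<xi> y \<omega> \<le> m"
    using local_max[of 0] zero_mem_Qbox0[OF \<open>0 \<le> s\<close>] by simp
  have "XiF \<xi> w \<phi> s y \<omega> = \<xi> y \<omega> * (1 - S) + (\<Sum>x\<in>?W. (\<phi> x)\<^sup>2 * \<xi> (x + y) \<omega>)"
    unfolding S_def by (rule XiF_eq_weighted_sum)
  also have "\<dots> \<le> m * (1 - S) + m * P"
  proof (rule add_mono)
    show "\<xi> y \<omega> * (1 - S) \<le> m * (1 - S)"
      using \<open>\<xi> y \<omega> \<le> m\<close> \<open>0 \<le> E\<close> mass E_eq P_def by (intro mult_right_mono) auto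
    show "(\<Sum>x\<in>?W. (\<phi> x)\<^sup>2 * \<xi> (x + y) \<omega>) \<le> m * P"
      unfolding P_def sum_distrib_left
    proof (intro sum_mono)
      fix x
      assume "x \<in> ?W"
      then show "(\<phi> x)\<^sup>2 * \<xi> (x + y) \<omega> \<le> m * (\<phi> x)\<^sup>2"
        using local_max[of x] by (simp add: mult.commute[of m] mult_left_mono)
    qed
  qed
  also have "\<dots> = m * (1 + E)"
    by (simp add: E_eq algebra_simps)
  also have "\<dots> \<le> a - 1"
    using energy \<open>0 < a\<close> \<open>0 \<le> E\<close> m \<open>\<kappa> + 1 \<le> a\<close> unfolding E_def
    by (intro bound_times_one_plus_le)
  finally show ?thesis .
qed

lemma Theta_ge_iff: "0 < a \<Longrightarrow> - s \<le> Theta a t f x \<omega> \<longleftrightarrow> t - s / a \<le> f x \<omega>"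
  unfolding Theta_def by (simp add: field_simps)

lemma Aev_Qbox_eq_empty: "s < 1 \<Longrightarrow> Aev M (Qbox s z) \<Theta> t = {}"
  unfolding Aev_def using Qbox_subset_singleton by blast

lemma arg_max_on_in_and_ge:
  fixes f :: "'b \<Rightarrow> 'c::linorder"
  assumes "finite S" and "S \<noteq> {}"
  shows "arg_max_on f S \<in> S" and "y \<in> S \<Longrightarrow> f y \<le> f (arg_max_on f S)"
proof -
  have "Max (f ` S) \<in> f ` S"
    using assms by simp
  then obtain k where k: "k \<in> S" "f k = Max (f ` S)"
    by auto
  have "arg_max_on f S \<in> S \<and> (\<forall>y\<in>S. f y \<le> f (arg_max_on f S))"
    unfolding arg_max_on_def
    by (rule arg_maxI[where P="\<lambda>x. x \<in> S" and x=k]) (use k assms in \<open>auto simp: not_less\<close>)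
  then show "arg_max_on f S \<in> S" and "y \<in> S \<Longrightarrow> f y \<le> f (arg_max_on f S)"
    by auto
qed

section \<open>Exponent estimates\<close>

lemma pair_exponent_le:
  fixes a q l :: real
  assumes q: "0 < q" "q \<le> 1" and a: "a \<le> q * a\<^sup>2 / 128" and half: "1 / 2 \<le> q * a\<^sup>2 / 128"
    and l: "l \<le> q * a\<^sup>2 / 128"
  shows "(a + 1)\<^sup>2 / 2 + l - (a - q * a / 128)\<^sup>2 / (2 - q) \<le> - (q * a\<^sup>2 / 32)"
proof -
  let ?b = "a - q * a / 128"
  have "?b\<^sup>2 = a\<^sup>2 - q * a\<^sup>2 / 64 + (q * a / 128)\<^sup>2"
    by (simp add: power2_eq_square field_simps)
  then have b: "a\<^sup>2 - q * a\<^sup>2 / 64 \<le> ?b\<^sup>2"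
    by simp
  have "?b\<^sup>2 * (1 / 2 + q / 4) * (2 - q) \<le> ?b\<^sup>2"
  proof -
    have "?b\<^sup>2 * (1 / 2 + q / 4) * (2 - q) = ?b\<^sup>2 - ?b\<^sup>2 * q\<^sup>2 / 4"
      by (simp add: power2_eq_square field_simps)
    then show ?thesis
      by simp
  qed
  then have "?b\<^sup>2 * (1 / 2 + q / 4) \<le> ?b\<^sup>2 / (2 - q)"
    using q by (simp add: le_divide_eq)
  moreover have "(a\<^sup>2 - q * a\<^sup>2 / 64) * (1 / 2 + q / 4) \<le> ?b\<^sup>2 * (1 / 2 + q / 4)"
    using b q by (intro mult_right_mono) auto
  moreover have "q * (q * a\<^sup>2) \<le> q * a\<^sup>2"
    using q by (simp add: mult_left_le_one_le)
  moreover have "(a\<^sup>2 - q * a\<^sup>2 / 64) * (1 / 2 + q / 4)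
      = a\<^sup>2 / 2 + 31 / 128 * (q * a\<^sup>2) - q * (q * a\<^sup>2) / 256"
    by (simp add: field_simps)
  moreover have "(a + 1)\<^sup>2 / 2 = a\<^sup>2 / 2 + a + 1 / 2"
    by (simp add: power2_eq_square field_simps)
  moreover have "0 \<le> q * a\<^sup>2"
    using q by simp
  ultimately show ?thesis
    using a half l by linarith
qed

text \<open>The constant is \<open>393216 = 3 \<cdot> 2 \<cdot> 256\<^sup>2\<close>: it makes the \<open>\<Phi>\<close>-exponent dominate \<open>3 a\<^sup>2\<close>.\<close>

lemma Phi_exponent_le:
  fixes a q D l :: real
  assumes a: "3 \<le> a" and q: "0 \<le> q" "q \<le> 1" and large: "393216 \<le> q\<^sup>2 * a * D"
    and l: "l \<le> q * a\<^sup>2 / 128"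
  shows "(a + 1)\<^sup>2 / 2 + l - (q * a / 256)\<^sup>2 * (a * D) / 2 \<le> - (q * a\<^sup>2 / 32)"
proof -
  have "(q * a / 256)\<^sup>2 * (a * D) / 2 = (q\<^sup>2 * a * D) * a\<^sup>2 / 131072"
    by (simp add: power2_eq_square field_simps)
  moreover have "393216 * a\<^sup>2 \<le> (q\<^sup>2 * a * D) * a\<^sup>2"
    using large by (intro mult_right_mono) auto
  moreover have "(a + 1)\<^sup>2 / 2 \<le> a\<^sup>2"
  proof -
    have "(a + 1)\<^sup>2 = a\<^sup>2 + 2 * a + 1"
      by (simp add: power2_eq_square algebra_simps)
    also have "\<dots> \<le> a\<^sup>2 + 3 * a"
      using a by simp
    also have "\<dots> \<le> 2 * a\<^sup>2"
      using a unfolding power2_eq_square by (simp add: mult_right_mono)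
    finally show ?thesis
      by simp
  qed
  moreover have "q * a\<^sup>2 \<le> a\<^sup>2"
    using q by (simp add: mult_left_le_one_le)
  moreover have "0 \<le> q * a\<^sup>2"
    using q by simp
  ultimately show ?thesis
    using l by linarith
qed

locale gaussian_potential = prob_space M
  for M :: "'a measure" +
  fixes xi :: "real \<Rightarrow> int ^ 'd \<Rightarrow> 'a \<Rightarrow> real"
    and v :: "real \<Rightarrow> int ^ 'd \<Rightarrow> real"
    and a R r :: "real \<Rightarrow> real"
    and phi :: "real \<Rightarrow> int ^ 'd \<Rightarrow> real"
    and c c' :: real
  assumes gauss: "\<forall>L\<ge>1. gaussian_field M (xi L) (\<lambda>x y. v L (y - x))"
    and unitvar: "\<forall>L\<ge>1. v L 0 = 1"
    and nonneg: "\<forall>L\<ge>1. \<forall>x. 0 \<le> v L x"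
    and condI: "\<forall>\<epsilon>>0. eventually (\<lambda>L. \<forall>x. exp (sqrt (ln L)) \<le> znorm x \<longrightarrow> v L x * ln (znorm x) \<le> \<epsilon>) at_top"
    and c_pos: "0 < c" and c'_pos: "0 < c'"
    and condII: "\<forall>L\<ge>1. \<forall>x. x \<noteq> 0 \<longrightarrow>
                   1 - exp (c' * znorm x) / dparam (v L) \<le> v L x \<and> v L x \<le> 1 - c / dparam (v L)"
    and a_def: "\<forall>L>1. measure M {\<omega>\<in>space M. a L < xi L 0 \<omega>} = L powr (- real CARD('d))"
    and R2: "((\<lambda>L. ln (R L) / ((a L)^2 / dparam (v L))) \<longlongrightarrow> 0) at_top"
    and r_pos: "\<forall>L>1. 0 < r L"
    and phibar: "\<forall>L\<ge>1. principal_eigenfunction (\<lambda>x. a L * (1 - v L x)) (Qbox0 (r L)) (phi L)"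
    and stand1: "((\<lambda>L. dparam (v L) / a L) \<longlongrightarrow> 0) at_top"
    and stand2: "((\<lambda>L. tauF M (xi L) (v L) (phi L) (r L) / ((1 / a L) * sqrt (a L / dparam (v L)))) \<longlongrightarrow> 0) at_top"
begin

text \<open>\<open>D L\<close> is \<open>d\<^sub>L\<close>, and \<open>gap L\<close> is the \<open>q\<close> of the proof sketch.\<close>

abbreviation D where "D L \<equiv> dparam (v L)"
abbreviation gap where "gap L \<equiv> c / D L"
abbreviation tau where "tau L \<equiv> tauF M (xi L) (v L) (phi L) (r L)"
abbreviation Phi where "Phi L \<equiv> PhiF (xi L) (v L) (phi L) (r L)"
abbreviation Xi where "Xi L \<equiv> XiF (xi L) (v L) (phi L) (r L)"

lemma xi_gaussian: "1 \<le> L \<Longrightarrow> centred_gaussian_field M (xi L) (\<lambda>x y. v L (y - x))"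
  using gauss by (intro centred_gaussian_field.intro centred_gaussian_field_axioms.intro prob_space_axioms) simp

lemma measurable_xi: "1 \<le> L \<Longrightarrow> xi L x \<in> borel_measurable M"
  using gauss unfolding gaussian_field_def by simp

lemma dparam_nonneg:
  assumes "1 \<le> L"
  shows "0 \<le> D L"
proof (rule ccontr)
  assume "\<not> 0 \<le> D L"
  obtain x :: "int^'d" where x: "x \<noteq> 0" "c / c' \<le> znorm x"
    using exists_far_point by blast
  have "c \<le> c' * znorm x"
    using x c'_pos by (simp add: field_simps)
  also have "\<dots> < exp (c' * znorm x)"
    using exp_ge_add_one_self[of "c' * znorm x"] by linarith
  finally have "c < exp (c' * znorm x)" .
  moreover have "exp (c' * znorm x) / D L \<ge> c / D L"
    using condII assms x(1) by force
  ultimately show False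
    using \<open>\<not> 0 \<le> D L\<close> by (simp add: divide_le_cancel)
qed

lemma v_le_1: "1 \<le> L \<Longrightarrow> v L x \<le> 1"
  using condII unitvar dparam_nonneg[of L] c_pos
  by (cases "x = 0") (auto intro: order_trans[of _ "1 - c / D L"])

lemma v_le_1_minus_gap: "1 \<le> L \<Longrightarrow> x \<noteq> 0 \<Longrightarrow> v L x \<le> 1 - gap L"
  using condII by blast

text \<open>Condition (I) rules out \<open>D L = 0\<close>, for which the division-by-zero convention would turn
  condition (II) into \<open>v L x = 1\<close> for all \<open>x \<noteq> 0\<close>.\<close>

lemma eventually_dparam_pos: "eventually (\<lambda>L. 0 < D L) at_top"
proof -
  have "eventually (\<lambda>L. \<forall>x. exp (sqrt (ln L)) \<le> znorm x \<longrightarrow> v L x * ln (znorm x) \<le> 1/2) at_top"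
    using spec[OF condI, of "1/2"] by simp
  with eventually_ge_at_top[of 1] show ?thesis
  proof eventually_elim
    case (elim L)
    show ?case
    proof (rule ccontr)
      assume "\<not> 0 < D L"
      then have "D L = 0"
        using dparam_nonneg[OF elim(1)] by simp
      obtain x :: "int^'d" where x: "x \<noteq> 0" "max (exp (sqrt (ln L))) (exp 1) \<le> znorm x"
        using exists_far_point by blast
      have "v L x = 1"
        using condII elim(1) x(1) \<open>D L = 0\<close> by force
      moreover have "1 \<le> ln (znorm x)"
        using x(2) by (metis exp_gt_zero ln_exp ln_le_cancel_iff max.bounded_iff order_less_le_trans)
      moreover have "v L x * ln (znorm x) \<le> 1/2"
        using elim(2) x(2) by simp
      ultimately show False
        by simp
    qed
  qed
qed

lemma eventually_c_le_dparam: "eventually (\<lambda>L. c \<le> D L) at_top"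
  using eventually_dparam_pos eventually_ge_at_top[of 1]
proof eventually_elim
  case (elim L)
  obtain x :: "int^'d" where "x \<noteq> 0"
    using exists_far_point by blast
  then have "0 \<le> 1 - gap L"
    using nonneg v_le_1_minus_gap[OF elim(2)] elim(2) by (meson order_trans)
  then show ?case
    using elim(1) by (simp add: divide_le_eq)
qed

lemma phi_mass_le_1:
  assumes "1 \<le> L"
  shows "(\<Sum>x\<in>Qbox0 (r L) - {0}. (phi L x)\<^sup>2) \<le> 1"
proof -
  have "(\<Sum>x\<in>Qbox0 (r L) - {0}. (phi L x)\<^sup>2) \<le> (\<Sum>x\<in>Qbox0 (r L). (phi L x)\<^sup>2)"
    by (intro sum_mono2) auto
  then show ?thesis
    using phibar assms unfolding principal_eigenfunction_def by force
qed

lemma phi_energy_le: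
  assumes "1 \<le> L"
  shows "a L * (\<Sum>x\<in>Qbox0 (r L) - {0}. (phi L x)\<^sup>2 * (1 - v L x)) \<le> 2 * real CARD('d)"
proof -
  let ?V = "\<lambda>x. a L * (1 - v L x)"
  obtain \<mu> where nonneg_phi: "\<forall>x. 0 \<le> phi L x" and norm: "(\<Sum>x\<in>Qbox0 (r L). (phi L x)\<^sup>2) = 1"
    and ep: "dirichlet_eigenpair ?V (Qbox0 (r L)) (phi L) \<mu>"
    using phibar assms unfolding principal_eigenfunction_def by blast
  have "(\<Sum>x\<in>Qbox0 (r L). (phi L x)\<^sup>2 * ?V x) \<le> 2 * real CARD('d)"
    using unitvar assms by (intro dirichlet_eigenfunction_energy_le[OF ep nonneg_phi norm]) simp
  moreover have "(\<Sum>x\<in>Qbox0 (r L). (phi L x)\<^sup>2 * ?V x) = (\<Sum>x\<in>Qbox0 (r L) - {0}. (phi L x)\<^sup>2 * ?V x)"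
    using unitvar assms by (intro sum.mono_neutral_right) auto
  ultimately show ?thesis
    by (simp add: sum_distrib_left algebra_simps)
qed

lemma Xi_le_of_max_xi_le:
  assumes "1 < L" and "2 * real CARD('d) + 1 \<le> a L" and "y \<in> Qbox (R L) z"
    and max_le: "Max ((\<lambda>x. xi L x \<omega>) ` Qbox (R L + r L) z) \<le> a L - (2 * real CARD('d) + 1)"
  shows "Xi L y \<omega> \<le> a L - 1"
proof (rule XiF_le_of_local_bound)
  show "xi L (x + y) \<omega> \<le> Max ((\<lambda>x. xi L x \<omega>) ` Qbox (R L + r L) z)" if "x \<in> Qbox0 (r L)" for x
    using add_mem_Qbox[OF \<open>y \<in> Qbox (R L) z\<close> that] by (simp add: add.commute)
qed (use assms r_pos v_le_1 phi_mass_le_1 phi_energy_le in auto)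

lemma Phi_eq_lincomb:
  "1 < L \<Longrightarrow> Phi L y = (\<lambda>\<omega>. \<Sum>k\<in>Qbox0 (r L). PhiF_coeff (v L) (phi L) (r L) k * xi L (k + y) \<omega>)"
  using r_pos by (intro ext PhiF_eq_lincomb) (simp add: less_imp_le)

lemma measurable_Phi:
  assumes "1 < L"
  shows "Phi L y \<in> borel_measurable M"
  using centred_gaussian_field.measurable_lincomb[OF xi_gaussian[of L]] assms
  by (simp add: Phi_eq_lincomb)

lemma tau_sq_eq:
  assumes "1 < L"
  shows "(tau L)\<^sup>2
    = lincomb_variance (\<lambda>x y. v L (y - x)) (Qbox0 (r L)) (\<lambda>k. k + y) (PhiF_coeff (v L) (phi L) (r L))"
proof -
  interpret centred_gaussian_field M "xi L" "\<lambda>x y. v L (y - x)"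
    using assms by (intro xi_gaussian) simp
  have "var M (Phi L 0)
      = lincomb_variance (\<lambda>x y. v L (y - x)) (Qbox0 (r L)) (\<lambda>k. k + 0) (PhiF_coeff (v L) (phi L) (r L))"
    using var_lincomb[of "Qbox0 (r L)"] assms by (simp add: Phi_eq_lincomb)
  moreover have "0 \<le> var M (Phi L 0)"
    by (rule var_nonneg)
  ultimately show ?thesis
    by (simp add: tauF_def lincomb_variance_def)
qed

lemma prob_Phi_ge_le:
  assumes "1 < L" and "0 \<le> \<eta>" and "(tau L)\<^sup>2 \<le> \<sigma>2" and "0 < \<sigma>2"
  shows "prob {\<omega>\<in>space M. \<eta> \<le> Phi L y \<omega>} \<le> exp (- \<eta>\<^sup>2 / (2 * \<sigma>2))"
proof -
  interpret centred_gaussian_field M "xi L" "\<lambda>x y. v L (y - x)"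
    using assms by (intro xi_gaussian) simp
  show ?thesis
    using prob_lincomb_ge_le[of "Qbox0 (r L)" \<eta>] tau_sq_eq[of L y] assms
    by (simp add: Phi_eq_lincomb)
qed

lemma prob_xi_pair_sum_ge_le:
  assumes "1 \<le> L" and "x \<noteq> y" and "0 \<le> b" and "c \<le> D L"
  shows "prob {\<omega>\<in>space M. 2 * b \<le> xi L x \<omega> + xi L y \<omega>} \<le> exp (- b\<^sup>2 / (2 - gap L))"
proof -
  interpret centred_gaussian_field M "xi L" "\<lambda>x y. v L (y - x)"
    using assms by (intro xi_gaussian)
  have "0 < gap L" "gap L \<le> 1"
    using assms(4) c_pos by auto
  have "lincomb_variance (\<lambda>x y. v L (y - x)) {x, y} id (\<lambda>_. 1) = 2 + v L (y - x) + v L (x - y)"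
    using assms(1,2) unitvar by (simp add: lincomb_variance_def)
  also have "\<dots> \<le> 4 - 2 * gap L"
    using assms(1,2) v_le_1_minus_gap[of L "y - x"] v_le_1_minus_gap[of L "x - y"] by simp
  finally have tail: "prob {\<omega>\<in>space M. 2 * b \<le> (\<Sum>k\<in>{x, y}. 1 * xi L (id k) \<omega>)}
      \<le> exp (- (2 * b)\<^sup>2 / (2 * (4 - 2 * gap L)))"
    using \<open>gap L \<le> 1\<close> assms(3) by (intro prob_lincomb_ge_le[where p=id]) auto
  have rescale: "(2 * b)\<^sup>2 / (2 * (4 - 2 * g)) = b\<^sup>2 / (2 - g)" if "g \<le> 1" for g :: real
    using that by (simp add: power2_eq_square field_simps)
  have "(\<Sum>k\<in>{x, y}. 1 * xi L (id k) \<omega>) = xi L x \<omega> + xi L y \<omega>" for \<omega>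
    using assms(2) by simp
  then show ?thesis
    using tail rescale[OF \<open>gap L \<le> 1\<close>] by simp
qed

lemma std_normal_density_le_prob_xi0:
  assumes "1 \<le> L" and "0 \<le> t"
  shows "std_normal_density (t + 1) \<le> prob {\<omega>\<in>space M. t < xi L 0 \<omega>}"
proof -
  interpret centred_gaussian_field M "xi L" "\<lambda>x y. v L (y - x)"
    using assms by (intro xi_gaussian)
  show ?thesis
    using std_normal_density_le_prob_lincomb_gt[of "{0}" id "\<lambda>_. 1" t] assms unitvar
    by (simp add: lincomb_variance_def)
qed

lemma eventually_a_pos: "eventually (\<lambda>L. 0 < a L) at_top"
proof -
  define p where "p = std_normal_density 1"
  have "0 < p"
    unfolding p_def by (simp add: normal_density_pos)
  have pos: "0 < a L" if "1 < L \<and> 1 / p < L" for L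
  proof (rule ccontr)
    assume "\<not> 0 < a L"
    have "p \<le> prob {\<omega>\<in>space M. 0 < xi L 0 \<omega>}"
      using std_normal_density_le_prob_xi0[of L 0] that unfolding p_def by auto
    also have "\<dots> \<le> prob {\<omega>\<in>space M. a L < xi L 0 \<omega>}"
    proof (rule finite_measure_mono)
      have "xi L 0 \<in> borel_measurable M"
        using that by (simp add: measurable_xi)
      then show "{\<omega>\<in>space M. a L < xi L 0 \<omega>} \<in> events"
        by measurable
    qed (use \<open>\<not> 0 < a L\<close> in auto)
    also have "\<dots> = L powr (- real CARD('d))"
      using a_def that by auto
    also have "\<dots> \<le> L powr (-1)"
      using that by (intro powr_mono) auto
    finally have "p * L \<le> 1"
      using that by (simp add: powr_minus_divide field_simps)
    then show False
      using that \<open>0 < p\<close> by (simp add: field_simps)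
  qed
  show ?thesis
    using eventually_conj[OF eventually_gt_at_top[of 1] eventually_gt_at_top[of "1 / p"]]
    by (rule eventually_mono) (rule pos)
qed

lemma filterlim_a_over_dparam: "filterlim (\<lambda>L. a L / D L) at_top at_top"
proof -
  have "eventually (\<lambda>L. 0 < D L / a L) at_top"
    using eventually_dparam_pos eventually_a_pos by eventually_elim simp
  then have "filterlim (\<lambda>L. inverse (D L / a L)) at_top at_top"
    by (rule filterlim_inverse_at_top[OF stand1])
  then show ?thesis
    by simp
qed

lemma filterlim_gap_a: "filterlim (\<lambda>L. gap L * a L) at_top at_top"
  using filterlim_tendsto_pos_mult_at_top[OF tendsto_const c_pos filterlim_a_over_dparam] by simp

lemma filterlim_a: "filterlim a at_top at_top"
  using filterlim_gap_a
proof (rule filterlim_at_top_mono)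
  show "eventually (\<lambda>L. gap L * a L \<le> a L) at_top"
    using eventually_c_le_dparam eventually_a_pos eventually_dparam_pos
    by eventually_elim (simp add: pos_divide_le_eq mult.commute[of c] mult_left_mono)
qed

lemma filterlim_gap_a_sq: "filterlim (\<lambda>L. gap L * (a L)\<^sup>2) at_top at_top"
  using filterlim_at_top_mult_at_top[OF filterlim_gap_a filterlim_a]
  by (simp add: power2_eq_square mult.assoc)

lemma filterlim_gap_sq_a_dparam: "filterlim (\<lambda>L. (gap L)\<^sup>2 * a L * D L) at_top at_top"
proof (rule filterlim_cong[THEN iffD1, OF refl refl _
      filterlim_tendsto_pos_mult_at_top[OF tendsto_const c_pos filterlim_gap_a]])
  show "eventually (\<lambda>L. c * (gap L * a L) = (gap L)\<^sup>2 * a L * D L) at_top"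
    using eventually_dparam_pos by eventually_elim (simp add: power2_eq_square)
qed

lemma eventually_tau_sq_le: "eventually (\<lambda>L. (tau L)\<^sup>2 \<le> 1 / (a L * D L)) at_top"
  using order_tendstoD(2)[OF stand2 zero_less_one] eventually_a_pos eventually_dparam_pos
proof eventually_elim
  case (elim L)
  have "0 \<le> tau L"
    by (simp add: tauF_def var_nonneg)
  moreover have "tau L < (1 / a L) * sqrt (a L / D L)"
    using elim by (simp add: divide_less_eq pos_less_divide_eq)
  ultimately have "(tau L)\<^sup>2 \<le> ((1 / a L) * sqrt (a L / D L))\<^sup>2"
    by (intro power_mono) auto
  also have "\<dots> = 1 / (a L * D L)"
    using elim by (simp add: power2_eq_square field_simps)
  finally show ?case .
qed

lemma eventually_card_ln_R_le:
  "eventually (\<lambda>L. real CARD('d) * ln (R L) \<le> gap L * (a L)\<^sup>2 / 128) at_top"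
proof -
  have "0 < c / (128 * real CARD('d))"
    using c_pos by simp
  from order_tendstoD(2)[OF R2 this] eventually_a_pos eventually_dparam_pos
  show ?thesis
  proof eventually_elim
    case (elim L)
    have le_of_div_less: "u \<le> \<epsilon> * w" if "u / w < \<epsilon>" and "0 < w" for u w \<epsilon> :: real
      using that by (simp add: pos_divide_less_eq)
    have "ln (R L) \<le> c / (128 * real CARD('d)) * ((a L)\<^sup>2 / D L)"
      by (rule le_of_div_less[OF elim(1)]) (use elim in simp)
    then have "real CARD('d) * ln (R L)
        \<le> real CARD('d) * (c / (128 * real CARD('d)) * ((a L)\<^sup>2 / D L))"
      by (intro mult_left_mono) auto
    then show ?case
      by simp
  qed
qed

lemma eventually_a_le_gap_a_sq: "eventually (\<lambda>L. a L \<le> gap L * (a L)\<^sup>2 / 128) at_top"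
  using filterlim_gap_a[unfolded filterlim_at_top, rule_format, of 128] eventually_a_pos
proof eventually_elim
  case (elim L)
  define t where "t = gap L * a L"
  have "a L * 128 \<le> a L * t"
    using elim unfolding t_def by (intro mult_left_mono) auto
  moreover have "gap L * (a L)\<^sup>2 / 128 = a L * t / 128"
    unfolding t_def by (simp add: power2_eq_square)
  ultimately show ?case
    by linarith
qed

lemma eventually_le_gap_a_sq_div:
  assumes "0 < k"
  shows "eventually (\<lambda>L. s \<le> gap L * (a L)\<^sup>2 / k) at_top"
proof -
  have "s \<le> t / k" if "k * s \<le> t" for t
    using that assms by (simp add: pos_le_divide_eq mult.commute)
  then show ?thesis
    using filterlim_gap_a_sq[unfolded filterlim_at_top, rule_format, of "k * s"]
    by (rule eventually_mono[rotated])
qed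

lemma eventually_L_pow_le:
  "eventually (\<lambda>L. L ^ CARD('d) \<le> sqrt (2 * pi) * exp ((a L + 1)\<^sup>2 / 2)) at_top"
  using eventually_a_pos eventually_gt_at_top[of 1]
proof eventually_elim
  case (elim L)
  have "exp (- (a L + 1)\<^sup>2 / 2) / sqrt (2 * pi) \<le> prob {\<omega>\<in>space M. a L < xi L 0 \<omega>}"
    using std_normal_density_le_prob_xi0[of L "a L"] elim by (simp add: std_normal_density_def)
  also have "\<dots> = 1 / L ^ CARD('d)"
    using a_def elim by (simp add: powr_minus_divide powr_realpow)
  finally show ?case
    using elim by (simp add: field_simps exp_minus)
qed

abbreviation aXi where "aXi L \<equiv> a L * sqrt (1 + (tau L)\<^sup>2)"
abbreviation eta where "eta L \<equiv> gap L * a L / 256"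

text \<open>\<open>Max {}\<close> is an unspecified real; requiring \<open>a L\<close> to exceed it by \<open>\<bar>s\<bar> + 1\<close> ensures
  that the threshold events of parts (i) and (iii) can only occur for a nonempty box.\<close>

definition large_enough :: "real \<Rightarrow> real \<Rightarrow> bool" where
  "large_enough s L \<longleftrightarrow> 1 < L \<and> c \<le> D L
     \<and> 2 * real CARD('d) + 1 \<le> a L \<and> \<bar>s\<bar> + \<bar>Max ({}::real set)\<bar> + 1 \<le> a L
     \<and> a L \<le> gap L * (a L)\<^sup>2 / 128 \<and> s \<le> gap L * (a L)\<^sup>2 / 256
     \<and> 393216 \<le> (gap L)\<^sup>2 * a L * D L
     \<and> (tau L)\<^sup>2 \<le> 1 / (a L * D L)
     \<and> real CARD('d) * ln (R L) \<le> gap L * (a L)\<^sup>2 / 128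
     \<and> L ^ CARD('d) \<le> sqrt (2 * pi) * exp ((a L + 1)\<^sup>2 / 2)"

lemma eventually_large_enough: "eventually (large_enough s) at_top"
proof -
  have "eventually (\<lambda>L. s \<le> gap L * (a L)\<^sup>2 / 256) at_top"
    by (rule eventually_le_gap_a_sq_div) simp
  with eventually_gt_at_top[of 1] eventually_c_le_dparam
    filterlim_a[unfolded filterlim_at_top, rule_format,
      of "max (2 * real CARD('d) + 1) (\<bar>s\<bar> + \<bar>Max ({}::real set)\<bar> + 1)"]
    eventually_a_le_gap_a_sq
    filterlim_gap_sq_a_dparam[unfolded filterlim_at_top, rule_format, of 393216]
    eventually_tau_sq_le eventually_card_ln_R_le eventually_L_pow_le
  show ?thesis
    unfolding large_enough_def by eventually_elim auto
qed

lemma large_enoughD: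
  assumes "large_enough s L"
  shows "1 < L" and "0 < a L" and "3 \<le> a L" and "0 < D L" and "0 < gap L" and "gap L \<le> 1"
    and "2 * real CARD('d) + 1 \<le> a L" and "s / a L < 1" and "Max ({}::real set) < a L - s / a L"
    and "0 \<le> eta L" and "s / a L \<le> eta L" and "2 * eta L \<le> a L / 2"
    and "a L \<le> gap L * (a L)\<^sup>2 / 128" and "1 / 2 \<le> gap L * (a L)\<^sup>2 / 128"
    and "393216 \<le> (gap L)\<^sup>2 * a L * D L"
    and "(tau L)\<^sup>2 \<le> 1 / (a L * D L)"
    and "real CARD('d) * ln (R L) \<le> gap L * (a L)\<^sup>2 / 128"
    and "L ^ CARD('d) \<le> sqrt (2 * pi) * exp ((a L + 1)\<^sup>2 / 2)"
proof -
  note le = assms[unfolded large_enough_def]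
  show "1 < L" "2 * real CARD('d) + 1 \<le> a L" "a L \<le> gap L * (a L)\<^sup>2 / 128"
    "393216 \<le> (gap L)\<^sup>2 * a L * D L" "(tau L)\<^sup>2 \<le> 1 / (a L * D L)"
    "real CARD('d) * ln (R L) \<le> gap L * (a L)\<^sup>2 / 128"
    "L ^ CARD('d) \<le> sqrt (2 * pi) * exp ((a L + 1)\<^sup>2 / 2)"
    using le by auto
  show "3 \<le> a L" and a_pos: "0 < a L"
    using le by (auto intro: order_trans[of _ "2 * real CARD('d) + 1"])
  show "0 < D L" and "0 < gap L" and "gap L \<le> 1"
    using le c_pos by auto
  have abs_s: "\<bar>s / a L\<bar> \<le> \<bar>s\<bar>"
    using \<open>3 \<le> a L\<close> by (simp add: abs_div divide_le_eq mult_le_cancel_left1)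
  moreover have bound: "\<bar>s\<bar> + \<bar>Max ({}::real set)\<bar> + 1 \<le> a L"
    using le by blast
  ultimately show "Max ({}::real set) < a L - s / a L"
    using abs_ge_self[of "s / a L"] abs_ge_self[of "Max ({}::real set)"] by linarith
  show "s / a L < 1"
    using bound a_pos abs_ge_self[of s] by (simp add: divide_less_eq)
  show "1 / 2 \<le> gap L * (a L)\<^sup>2 / 128"
    using le \<open>3 \<le> a L\<close> by linarith
  show "0 \<le> eta L"
    using a_pos c_pos \<open>0 < D L\<close> by simp
  show "s / a L \<le> eta L"
    using le a_pos by (simp add: power2_eq_square divide_le_eq field_simps)
  show "2 * eta L \<le> a L / 2"
    using le a_pos c_pos by (simp add: field_simps)
qed

lemma a_le_aXi: "0 \<le> a L \<Longrightarrow> a L \<le> aXi L"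
  using mult_left_mono[of 1 "sqrt (1 + (tau L)\<^sup>2)" "a L"] by simp

lemma threshold_bounds:
  assumes "large_enough s L"
  shows "a L - eta L \<le> aXi L - s / a L" and "a L - 1 < aXi L - s / a L"
    and "Max ({}::real set) < aXi L - s / a L"
proof -
  note le = large_enoughD[OF assms]
  have "a L \<le> aXi L"
    using \<open>0 < a L\<close> by (intro a_le_aXi) simp
  then show "a L - eta L \<le> aXi L - s / a L" and "a L - 1 < aXi L - s / a L"
    and "Max ({}::real set) < aXi L - s / a L"
    using \<open>s / a L \<le> eta L\<close> \<open>s / a L < 1\<close> \<open>Max ({}::real set) < a L - s / a L\<close> by linarith+
qed

abbreviation Xi_high_xi_low_event where
  "Xi_high_xi_low_event L z s \<equiv> {\<omega>\<in>space M. aXi L - s / a L \<le> Max ((\<lambda>x. Xi L x \<omega>) ` Qbox (R L) z)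
     \<and> Max ((\<lambda>x. xi L x \<omega>) ` Qbox (R L + r L) z) \<le> a L - (2 * real CARD('d) + 1)}"

abbreviation arg_max_event where
  "arg_max_event L z s \<equiv> {\<omega>\<in>space M. aXi L - s / a L \<le> Max ((\<lambda>x. Xi L x \<omega>) ` Qbox (R L) z)
     \<and> arg_max_on (\<lambda>x. xi L x \<omega>) (Qbox (R L) z) \<noteq> arg_max_on (\<lambda>x. Xi L x \<omega>) (Qbox (R L) z)}"

definition high_pair_event :: "real \<Rightarrow> int^'d \<Rightarrow> 'a set" where
  "high_pair_event L z = (\<Union>x\<in>Qbox (R L) z. \<Union>y\<in>Qbox (R L) z - {x}.
     {\<omega>\<in>space M. 2 * (a L - 2 * eta L) \<le> xi L x \<omega> + xi L y \<omega>})"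

definition high_Phi_event :: "real \<Rightarrow> int^'d \<Rightarrow> 'a set" where
  "high_Phi_event L z = (\<Union>y\<in>Qbox (R L) z. {\<omega>\<in>space M. eta L \<le> Phi L y \<omega>})"

abbreviation bad_event where "bad_event L z \<equiv> high_pair_event L z \<union> high_Phi_event L z"

lemma high_events_in_events:
  assumes "1 < L"
  shows "high_pair_event L z \<in> events" and "high_Phi_event L z \<in> events"
proof -
  have "xi L x \<in> borel_measurable M" "Phi L y \<in> borel_measurable M" for x y
    using assms by (simp_all add: measurable_xi measurable_Phi)
  then have "{\<omega>\<in>space M. t \<le> xi L x \<omega> + xi L y \<omega>} \<in> events"
    and "{\<omega>\<in>space M. t \<le> Phi L y \<omega>} \<in> events" for t x y
    by measurable
  then show "high_pair_event L z \<in> events" and "high_Phi_event L z \<in> events"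
    unfolding high_pair_event_def high_Phi_event_def by (intro sets.finite_UN; simp)+
qed

lemma prob_high_pair_event_le:
  fixes z :: "int^'d"
  assumes "large_enough s L"
  shows "prob (high_pair_event L z)
    \<le> (real (card (Qbox (R L) z)))\<^sup>2 * exp (- (a L - 2 * eta L)\<^sup>2 / (2 - gap L))"
proof -
  note le = large_enoughD[OF assms]
  let ?Q = "Qbox (R L) z"
  let ?A = "\<lambda>x y. {\<omega>\<in>space M. 2 * (a L - 2 * eta L) \<le> xi L x \<omega> + xi L y \<omega>}"
  define n where "n = real (card ?Q)"
  define e where "e = exp (- (a L - 2 * eta L)\<^sup>2 / (2 - gap L))"
  have "xi L x \<in> borel_measurable M" for x
    using \<open>1 < L\<close> by (simp add: measurable_xi)
  then have A_events: "?A x y \<in> events" for x y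
    by measurable
  have "prob (\<Union>y\<in>?Q - {x}. ?A x y) \<le> n * e" for x
  proof -
    have "prob (\<Union>y\<in>?Q - {x}. ?A x y) \<le> (\<Sum>y\<in>?Q - {x}. prob (?A x y))"
      by (intro measure_UNION_le A_events) simp
    also have "\<dots> \<le> (\<Sum>y\<in>?Q - {x}. e)"
      unfolding e_def using le by (intro sum_mono prob_xi_pair_sum_ge_le) auto
    also have "\<dots> \<le> n * e"
      unfolding n_def e_def by (simp add: card_Diff_subset card_mono mult_right_mono)
    finally show ?thesis .
  qed
  then have "(\<Sum>x\<in>?Q. prob (\<Union>y\<in>?Q - {x}. ?A x y)) \<le> (\<Sum>x\<in>?Q. n * e)"
    by (rule sum_mono)
  moreover have "prob (high_pair_event L z) \<le> (\<Sum>x\<in>?Q. prob (\<Union>y\<in>?Q - {x}. ?A x y))"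
    unfolding high_pair_event_def by (intro measure_UNION_le sets.finite_UN A_events) simp_all
  ultimately show ?thesis
    by (simp add: n_def e_def power2_eq_square)
qed

lemma prob_high_Phi_event_le:
  fixes z :: "int^'d"
  assumes "large_enough s L"
  shows "prob (high_Phi_event L z)
    \<le> (real (card (Qbox (R L) z)))\<^sup>2 * exp (- (eta L)\<^sup>2 * (a L * D L) / 2)"
proof -
  note le = large_enoughD[OF assms]
  let ?Q = "Qbox (R L) z"
  have "Phi L y \<in> borel_measurable M" for y
    using \<open>1 < L\<close> by (simp add: measurable_Phi)
  then have "{\<omega>\<in>space M. eta L \<le> Phi L y \<omega>} \<in> events" for y
    by measurable
  then have "prob (high_Phi_event L z) \<le> (\<Sum>y\<in>?Q. prob {\<omega>\<in>space M. eta L \<le> Phi L y \<omega>})"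
    unfolding high_Phi_event_def by (intro measure_UNION_le) simp_all
  also have "\<dots> \<le> (\<Sum>y\<in>?Q. exp (- (eta L)\<^sup>2 * (a L * D L) / 2))"
  proof (rule sum_mono)
    fix y
    show "prob {\<omega>\<in>space M. eta L \<le> Phi L y \<omega>} \<le> exp (- (eta L)\<^sup>2 * (a L * D L) / 2)"
      using prob_Phi_ge_le[of L "eta L" "1 / (a L * D L)" y] le by simp
  qed
  also have "\<dots> \<le> (real (card ?Q))\<^sup>2 * exp (- (eta L)\<^sup>2 * (a L * D L) / 2)"
    by (cases "card ?Q") (auto simp: power2_eq_square mult_right_mono)
  finally show ?thesis .
qed

lemma prob_bad_event_le:
  fixes z :: "int^'d"
  assumes "large_enough s L"
  shows "prob (bad_event L z) \<le> (real (card (Qbox (R L) z)))\<^sup>2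
    * (exp (- (a L - 2 * eta L)\<^sup>2 / (2 - gap L)) + exp (- (eta L)\<^sup>2 * (a L * D L) / 2))"
proof -
  have "prob (bad_event L z) \<le> prob (high_pair_event L z) + prob (high_Phi_event L z)"
    using high_events_in_events[OF large_enoughD(1)[OF assms]] by (intro measure_Un_le)
  then show ?thesis
    using prob_high_pair_event_le[OF assms, of z] prob_high_Phi_event_le[OF assms, of z]
    unfolding distrib_left by linarith
qed

lemma scaled_card_Qbox_sq_le:
  fixes z :: "int^'d"
  assumes "1 \<le> R L" and "0 < L"
  shows "(L / R L) ^ CARD('d) * (real (card (Qbox (R L) z)))\<^sup>2
    \<le> 4 ^ CARD('d) * L ^ CARD('d) * exp (real CARD('d) * ln (R L))"
proof -
  have "real (card (Qbox (R L) z)) \<le> (2 * R L) ^ CARD('d)"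
    using card_Qbox_le[of "R L" z] power_mono[of "R L + 1" "2 * R L" "CARD('d)"] assms(1) by simp
  then have "(real (card (Qbox (R L) z)))\<^sup>2 \<le> ((2 * R L) ^ CARD('d))\<^sup>2"
    by (intro power_mono) auto
  then have "(L / R L) ^ CARD('d) * (real (card (Qbox (R L) z)))\<^sup>2
      \<le> (L / R L) ^ CARD('d) * ((2 * R L) ^ CARD('d))\<^sup>2"
    using assms by (intro mult_left_mono) auto
  also have "\<dots> = 4 ^ CARD('d) * L ^ CARD('d) * R L ^ CARD('d)"
  proof -
    have "(L / R L) ^ CARD('d) * R L ^ CARD('d) = L ^ CARD('d)"
      using assms(1) by (simp add: power_divide)
    moreover have "(4::real) ^ CARD('d) = 2 ^ CARD('d) * 2 ^ CARD('d)"
      using power_mult_distrib[of "2::real" 2 "CARD('d)"] by simp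
    ultimately show ?thesis
      by (simp add: power2_eq_square power_mult_distrib mult_ac)
  qed
  also have "R L ^ CARD('d) = exp (real CARD('d) * ln (R L))"
    using assms(1) by (simp add: exp_of_nat_mult)
  finally show ?thesis .
qed

lemma scaled_prob_bad_event_le:
  fixes z :: "int^'d"
  assumes "large_enough s L" and "1 \<le> R L"
  shows "(L / R L) ^ CARD('d) * prob (bad_event L z)
    \<le> 2 * 4 ^ CARD('d) * sqrt (2 * pi) * exp (- (gap L * (a L)\<^sup>2 / 32))"
proof -
  note le = large_enoughD[OF assms(1)]
  define G where "G = gap L * (a L)\<^sup>2 / 32"
  define E where "E = (a L + 1)\<^sup>2 / 2 + real CARD('d) * ln (R L)"
  have pair: "E - (a L - 2 * eta L)\<^sup>2 / (2 - gap L) \<le> - G"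
    using pair_exponent_le[of "gap L" "a L" "real CARD('d) * ln (R L)"] le
    unfolding E_def G_def by (simp add: algebra_simps)
  have Phi: "E - (eta L)\<^sup>2 * (a L * D L) / 2 \<le> - G"
    using Phi_exponent_le[of "a L" "gap L" "D L" "real CARD('d) * ln (R L)"] le
    unfolding E_def G_def by (simp add: algebra_simps)
  have "(L / R L) ^ CARD('d) * prob (bad_event L z)
      \<le> 4 ^ CARD('d) * sqrt (2 * pi) * exp E
        * (exp (- (a L - 2 * eta L)\<^sup>2 / (2 - gap L)) + exp (- (eta L)\<^sup>2 * (a L * D L) / 2))"
  proof -
    have "(L / R L) ^ CARD('d) * prob (bad_event L z)
        \<le> (L / R L) ^ CARD('d) * (real (card (Qbox (R L) z)))\<^sup>2
          * (exp (- (a L - 2 * eta L)\<^sup>2 / (2 - gap L)) + exp (- (eta L)\<^sup>2 * (a L * D L) / 2))"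
      using prob_bad_event_le[OF assms(1), of z] \<open>1 < L\<close> assms(2)
      by (simp add: mult.assoc mult_left_mono)
    also have "\<dots> \<le> 4 ^ CARD('d) * L ^ CARD('d) * exp (real CARD('d) * ln (R L))
          * (exp (- (a L - 2 * eta L)\<^sup>2 / (2 - gap L)) + exp (- (eta L)\<^sup>2 * (a L * D L) / 2))"
      using scaled_card_Qbox_sq_le[OF assms(2)] \<open>1 < L\<close> by (intro mult_right_mono) auto
    also have "\<dots> \<le> 4 ^ CARD('d) * (sqrt (2 * pi) * exp ((a L + 1)\<^sup>2 / 2)) * exp (real CARD('d) * ln (R L))
          * (exp (- (a L - 2 * eta L)\<^sup>2 / (2 - gap L)) + exp (- (eta L)\<^sup>2 * (a L * D L) / 2))"
      using le by (intro mult_right_mono mult_left_mono) auto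
    finally show ?thesis
      by (simp add: E_def exp_add mult_ac)
  qed
  also have "\<dots> \<le> 4 ^ CARD('d) * sqrt (2 * pi) * (exp (- G) + exp (- G))"
    unfolding mult.assoc[of _ "exp E"] distrib_left[of "exp E"] mult_exp_exp
    using pair Phi by (intro mult_left_mono add_mono) auto
  finally show ?thesis
    by (simp add: G_def)
qed

lemma bad_eventI_pair:
  assumes "\<omega> \<in> space M" and "x \<in> Qbox (R L) z" and "y \<in> Qbox (R L) z" and "x \<noteq> y"
    and "a L - 2 * eta L \<le> xi L x \<omega>" and "a L - 2 * eta L \<le> xi L y \<omega>"
  shows "\<omega> \<in> bad_event L z"
  using assms unfolding high_pair_event_def by (intro UnI1 UN_I[of x] UN_I[of y]) auto

lemma bad_eventI_Phi:
  assumes "\<omega> \<in> space M" and "y \<in> Qbox (R L) z" and "eta L \<le> Phi L y \<omega>"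
  shows "\<omega> \<in> bad_event L z"
  using assms unfolding high_Phi_event_def by blast

lemma xi_ge_of_Xi_ge:
  "a L - eta L \<le> Xi L x \<omega> \<Longrightarrow> Phi L x \<omega> < eta L \<Longrightarrow> a L - 2 * eta L \<le> xi L x \<omega>"
  unfolding XiF_def by simp

lemma Aev_xi_subset_bad_event:
  assumes "large_enough s L"
  shows "Aev M (Qbox (R L) z) (Theta (a L) (a L) (xi L)) s \<subseteq> bad_event L z"
proof
  note le = large_enoughD[OF assms]
  fix \<omega>
  assume "\<omega> \<in> Aev M (Qbox (R L) z) (Theta (a L) (a L) (xi L)) s"
  then obtain x y where "\<omega> \<in> space M" "x \<in> Qbox (R L) z" "y \<in> Qbox (R L) z" "x \<noteq> y"
    and "a L - s / a L \<le> xi L x \<omega>" "a L - s / a L \<le> xi L y \<omega>"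
    unfolding Aev_def using \<open>0 < a L\<close> by (auto simp: Theta_ge_iff)
  moreover have "s / a L \<le> 2 * eta L"
    using \<open>s / a L \<le> eta L\<close> \<open>0 \<le> eta L\<close> by simp
  ultimately show "\<omega> \<in> bad_event L z"
    by (intro bad_eventI_pair[of \<omega> x L z y]) auto
qed

lemma Aev_Xi_subset_bad_event:
  assumes "large_enough s L"
  shows "Aev M (Qbox (R L) z) (Theta (a L) (aXi L) (Xi L)) s \<subseteq> bad_event L z"
proof
  note le = large_enoughD[OF assms]
  fix \<omega>
  assume "\<omega> \<in> Aev M (Qbox (R L) z) (Theta (a L) (aXi L) (Xi L)) s"
  then obtain x y where \<omega>: "\<omega> \<in> space M" and xy: "x \<in> Qbox (R L) z" "y \<in> Qbox (R L) z" "x \<noteq> y"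
    and "aXi L - s / a L \<le> Xi L x \<omega>" "aXi L - s / a L \<le> Xi L y \<omega>"
    unfolding Aev_def using \<open>0 < a L\<close> by (auto simp: Theta_ge_iff)
  moreover have "a L - eta L \<le> aXi L - s / a L"
    by (rule threshold_bounds(1)[OF assms])
  ultimately have "a L - eta L \<le> Xi L x \<omega>" "a L - eta L \<le> Xi L y \<omega>"
    by linarith+
  then show "\<omega> \<in> bad_event L z"
  proof (cases "eta L \<le> Phi L x \<omega> \<or> eta L \<le> Phi L y \<omega>")
    case True
    then show ?thesis
      using \<omega> xy bad_eventI_Phi[of \<omega> x L z] bad_eventI_Phi[of \<omega> y L z] by blast
  next
    case False
    then show ?thesis
      using \<omega> xy \<open>a L - eta L \<le> Xi L x \<omega>\<close> \<open>a L - eta L \<le> Xi L y \<omega>\<close>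
      by (intro bad_eventI_pair[of \<omega> x L z y] xi_ge_of_Xi_ge) auto
  qed
qed

lemma Qbox_nonempty_if_threshold_le_Max:
  assumes "large_enough s L" and "aXi L - s / a L \<le> Max (f ` Qbox (R L) z)"
  shows "Qbox (R L) z \<noteq> {}"
  using assms(2) threshold_bounds(3)[OF assms(1)] by auto

lemma arg_max_event_subset_bad_event:
  assumes "large_enough s L"
  shows "arg_max_event L z s \<subseteq> bad_event L z"
proof (intro subsetI, elim CollectE conjE)
  let ?Q = "Qbox (R L) z"
  fix \<omega>
  assume \<omega>: "\<omega> \<in> space M" and threshold_le: "aXi L - s / a L \<le> Max ((\<lambda>x. Xi L x \<omega>) ` ?Q)"
    and neq: "arg_max_on (\<lambda>x. xi L x \<omega>) ?Q \<noteq> arg_max_on (\<lambda>x. Xi L x \<omega>) ?Q"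
  define x where "x = arg_max_on (\<lambda>x. xi L x \<omega>) ?Q"
  define y where "y = arg_max_on (\<lambda>x. Xi L x \<omega>) ?Q"
  have ne: "?Q \<noteq> {}"
    by (rule Qbox_nonempty_if_threshold_le_Max[OF assms threshold_le])
  have "x \<in> ?Q" and "y \<in> ?Q"
    unfolding x_def y_def by (intro arg_max_on_in_and_ge(1)[OF finite_Qbox ne])+
  have xi_le: "xi L y \<omega> \<le> xi L x \<omega>"
    unfolding x_def by (rule arg_max_on_in_and_ge(2)[OF finite_Qbox ne \<open>y \<in> ?Q\<close>])
  have "Xi L w \<omega> \<le> Xi L y \<omega>" if "w \<in> ?Q" for w
    unfolding y_def by (rule arg_max_on_in_and_ge(2)[OF finite_Qbox ne that])
  then have "Max ((\<lambda>x. Xi L x \<omega>) ` ?Q) \<le> Xi L y \<omega>"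
    using ne by simp
  moreover have "a L - eta L \<le> aXi L - s / a L"
    by (rule threshold_bounds(1)[OF assms])
  ultimately have "a L - eta L \<le> Xi L y \<omega>"
    using threshold_le by linarith
  show "\<omega> \<in> bad_event L z"
  proof (cases "eta L \<le> Phi L y \<omega>")
    case True
    then show ?thesis
      using \<omega> \<open>y \<in> ?Q\<close> by (intro bad_eventI_Phi)
  next
    case False
    then have "a L - 2 * eta L \<le> xi L y \<omega>"
      using \<open>a L - eta L \<le> Xi L y \<omega>\<close> by (intro xi_ge_of_Xi_ge) auto
    moreover have "x \<noteq> y"
      using neq unfolding x_def y_def .
    ultimately show ?thesis
      using \<omega> \<open>x \<in> ?Q\<close> \<open>y \<in> ?Q\<close> xi_le by (intro bad_eventI_pair[of \<omega> x L z y]) auto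
  qed
qed

lemma arg_max_event_empty_if_R_lt_1:
  assumes "large_enough s L" and "R L < 1"
  shows "arg_max_event L z s = {}"
proof (intro equals0I)
  fix \<omega>
  assume "\<omega> \<in> arg_max_event L z s"
  then have threshold_le: "aXi L - s / a L \<le> Max ((\<lambda>x. Xi L x \<omega>) ` Qbox (R L) z)"
    and neq: "arg_max_on (\<lambda>x. xi L x \<omega>) (Qbox (R L) z) \<noteq> arg_max_on (\<lambda>x. Xi L x \<omega>) (Qbox (R L) z)"
    by auto
  have ne: "Qbox (R L) z \<noteq> {}"
    by (rule Qbox_nonempty_if_threshold_le_Max[OF assms(1) threshold_le])
  have "arg_max_on f (Qbox (R L) z) = z" for f :: "int^'d \<Rightarrow> real"
    using subsetD[OF Qbox_subset_singleton[OF assms(2)] arg_max_on_in_and_ge(1)[OF finite_Qbox ne]]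
    by simp
  then show False
    using neq by simp
qed

lemma tendsto_exp_bound_zero: "((\<lambda>L. K * exp (- (gap L * (a L)\<^sup>2 / 32))) \<longlongrightarrow> 0) at_top"
proof -
  have "filterlim (\<lambda>L. gap L * (a L)\<^sup>2 / 32) at_top at_top"
    unfolding filterlim_at_top by (intro allI eventually_le_gap_a_sq_div) simp
  then show ?thesis
    by (intro tendsto_mult_right_zero filterlim_compose[OF exp_at_bot]
        filterlim_uminus_at_top[THEN iffD1])
qed

lemma tendsto_scaled_prob_zero:
  fixes z :: "int^'d"
  assumes small: "\<And>L. large_enough s L \<Longrightarrow> R L < 1 \<Longrightarrow> E L = {}"
    and large: "\<And>L. large_enough s L \<Longrightarrow> 1 \<le> R L \<Longrightarrow> E L \<subseteq> bad_event L z"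
  shows "((\<lambda>L. (L / R L) ^ CARD('d) * prob (E L)) \<longlongrightarrow> 0) at_top"
proof (rule tendsto_sandwich[OF _ _ tendsto_const tendsto_exp_bound_zero])
  show "eventually (\<lambda>L. 0 \<le> (L / R L) ^ CARD('d) * prob (E L)) at_top"
    using eventually_large_enough[of s]
  proof eventually_elim
    case (elim L)
    then show ?case
      using small[OF elim] large_enoughD(1)[OF elim] by (cases "R L < 1") auto
  qed
  show "eventually (\<lambda>L. (L / R L) ^ CARD('d) * prob (E L)
      \<le> 2 * 4 ^ CARD('d) * sqrt (2 * pi) * exp (- (gap L * (a L)\<^sup>2 / 32))) at_top"
    using eventually_large_enough[of s]
  proof eventually_elim
    case (elim L)
    show ?case
    proof (cases "R L < 1")
      case True
      then show ?thesis
        using small[OF elim] by simp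
    next
      case False
      have "prob (E L) \<le> prob (bad_event L z)"
        using large[OF elim] False high_events_in_events[OF large_enoughD(1)[OF elim]]
        by (intro prob_mono_subset) auto
      then have "(L / R L) ^ CARD('d) * prob (E L) \<le> (L / R L) ^ CARD('d) * prob (bad_event L z)"
        using False large_enoughD(1)[OF elim] by (intro mult_left_mono) auto
      also have "\<dots> \<le> 2 * 4 ^ CARD('d) * sqrt (2 * pi) * exp (- (gap L * (a L)\<^sup>2 / 32))"
        using False by (intro scaled_prob_bad_event_le[OF elim]) simp
      finally show ?thesis .
    qed
  qed
qed

lemma Xi_high_xi_low_event_empty:
  assumes "large_enough s L"
  shows "Xi_high_xi_low_event L z s = {}"
proof (intro equals0I)
  note le = large_enoughD[OF assms]
  fix \<omega>
  assume "\<omega> \<in> Xi_high_xi_low_event L z s"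
  then have threshold_le: "aXi L - s / a L \<le> Max ((\<lambda>x. Xi L x \<omega>) ` Qbox (R L) z)"
    and max_le: "Max ((\<lambda>x. xi L x \<omega>) ` Qbox (R L + r L) z) \<le> a L - (2 * real CARD('d) + 1)"
    by auto
  have "Qbox (R L) z \<noteq> {}"
    by (rule Qbox_nonempty_if_threshold_le_Max[OF assms threshold_le])
  then have "Max ((\<lambda>x. Xi L x \<omega>) ` Qbox (R L) z) \<in> (\<lambda>x. Xi L x \<omega>) ` Qbox (R L) z"
    by simp
  then obtain y where "y \<in> Qbox (R L) z" and y: "Max ((\<lambda>x. Xi L x \<omega>) ` Qbox (R L) z) = Xi L y \<omega>"
    by auto
  have "Xi L y \<omega> \<le> a L - 1"
    using \<open>1 < L\<close> \<open>2 * real CARD('d) + 1 \<le> a L\<close> \<open>y \<in> Qbox (R L) z\<close> max_le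
    by (rule Xi_le_of_max_xi_le)
  then show False
    using threshold_le y threshold_bounds(2)[OF assms] by linarith
qed

lemma eventually_Xi_high_xi_low_event_empty:
  "\<exists>L0\<ge>1. \<forall>L\<ge>L0. \<forall>z::int ^ 'd. Xi_high_xi_low_event L z s = {}"
proof -
  obtain N where "\<And>L. N \<le> L \<Longrightarrow> large_enough s L"
    using eventually_large_enough[of s] unfolding eventually_at_top_linorder by blast
  then show ?thesis
    by (intro exI[of _ "max N 1"]) (simp add: Xi_high_xi_low_event_empty)
qed

lemma scaled_prob_Aev_xi_tendsto_zero:
  "((\<lambda>L. (L / R L) ^ CARD('d) * prob (Aev M (Qbox (R L) z) (Theta (a L) (a L) (xi L)) s))
     \<longlongrightarrow> 0) at_top"
  by (rule tendsto_scaled_prob_zero[of s _ z])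
    (simp_all add: Aev_Qbox_eq_empty Aev_xi_subset_bad_event)

lemma scaled_prob_Aev_Xi_tendsto_zero:
  "((\<lambda>L. (L / R L) ^ CARD('d) * prob (Aev M (Qbox (R L) z) (Theta (a L) (aXi L) (Xi L)) s))
     \<longlongrightarrow> 0) at_top"
  by (rule tendsto_scaled_prob_zero[of s _ z])
    (simp_all add: Aev_Qbox_eq_empty Aev_Xi_subset_bad_event)

lemma scaled_prob_arg_max_event_tendsto_zero:
  "((\<lambda>L. (L / R L) ^ CARD('d) * prob (arg_max_event L z s)) \<longlongrightarrow> 0) at_top"
  by (rule tendsto_scaled_prob_zero[of s _ z])
    (simp_all add: arg_max_event_empty_if_R_lt_1 arg_max_event_subset_bad_event)

end

theorem lemma2p7:
  fixes M :: "'a measure"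
    and xi :: "real \<Rightarrow> int ^ 'd \<Rightarrow> 'a \<Rightarrow> real"
    and v :: "real \<Rightarrow> int ^ 'd \<Rightarrow> real"
    and a R r :: "real \<Rightarrow> real"
    and phi :: "real \<Rightarrow> int ^ 'd \<Rightarrow> real"
  assumes P: "prob_space M"
    and gauss: "\<forall>L\<ge>1. gaussian_field M (xi L) (\<lambda>x y. v L (y - x))"
    and unitvar: "\<forall>L\<ge>1. v L 0 = 1"
    and nonneg: "\<forall>L\<ge>1. \<forall>x. 0 \<le> v L x"
    and condI: "\<forall>\<epsilon>>0. eventually (\<lambda>L. \<forall>x. exp (sqrt (ln L)) \<le> znorm x \<longrightarrow> v L x * ln (znorm x) \<le> \<epsilon>) at_top"
    and condII: "\<exists>c c'. 0 < c \<and> 0 < c' \<and> (\<forall>L\<ge>1. \<forall>x. x \<noteq> 0 \<longrightarrow>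
                   1 - exp (c' * znorm x) / dparam (v L) \<le> v L x \<and> v L x \<le> 1 - c / dparam (v L))"
    and a_def: "\<forall>L>1. measure M {\<omega>\<in>space M. a L < xi L 0 \<omega>} = L powr (- real CARD('d))"
    and R1: "((\<lambda>L. a L / ln (R L)) \<longlongrightarrow> 0) at_top"
    and R2: "((\<lambda>L. ln (R L) / ((a L)^2 / dparam (v L))) \<longlongrightarrow> 0) at_top"
    and r1: "\<forall>L>1. 0 < r L \<and> (0 < a L \<longrightarrow> ln (a L) \<le> ln (r L))"
    and r2: "((\<lambda>L. ln (r L) / sqrt (a L)) \<longlongrightarrow> 0) at_top"
    and phibar: "\<forall>L\<ge>1. principal_eigenfunction (\<lambda>x. a L * (1 - v L x)) (Qbox0 (r L)) (phi L)"
    and stand1: "((\<lambda>L. dparam (v L) / a L) \<longlongrightarrow> 0) at_top"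
    and stand2: "((\<lambda>L. tauF M (xi L) (v L) (phi L) (r L) / ((1 / a L) * sqrt (a L / dparam (v L)))) \<longlongrightarrow> 0) at_top"
  shows
   "(\<forall>s::real. \<exists>L0\<ge>1. \<forall>L\<ge>L0. \<forall>z::int ^ 'd.
       {\<omega>\<in>space M.
          a L * sqrt (1 + (tauF M (xi L) (v L) (phi L) (r L))^2) - s / a L
            \<le> Max ((\<lambda>x. XiF (xi L) (v L) (phi L) (r L) x \<omega>) ` Qbox (R L) z)
        \<and> Max ((\<lambda>x. xi L x \<omega>) ` Qbox (R L + r L) z) \<le> a L - (2 * real CARD('d) + 1)} = {})
  \<and> (\<forall>(z::int ^ 'd) (s::real).
       ((\<lambda>L. (L / R L) ^ CARD('d) * measure M (Aev M (Qbox (R L) z) (Theta (a L) (a L) (xi L)) s))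
          \<longlongrightarrow> 0) at_top
     \<and> ((\<lambda>L. (L / R L) ^ CARD('d) * measure M (Aev M (Qbox (R L) z)
              (Theta (a L) (a L * sqrt (1 + (tauF M (xi L) (v L) (phi L) (r L))^2))
                 (XiF (xi L) (v L) (phi L) (r L))) s))
          \<longlongrightarrow> 0) at_top)
  \<and> (\<forall>(z::int ^ 'd) (s::real).
       ((\<lambda>L. (L / R L) ^ CARD('d) * measure M
          {\<omega>\<in>space M.
             a L * sqrt (1 + (tauF M (xi L) (v L) (phi L) (r L))^2) - s / a L
               \<le> Max ((\<lambda>x. XiF (xi L) (v L) (phi L) (r L) x \<omega>) ` Qbox (R L) z)
           \<and> arg_max_on (\<lambda>x. xi L x \<omega>) (Qbox (R L) z)
               \<noteq> arg_max_on (\<lambda>x. XiF (xi L) (v L) (phi L) (r L) x \<omega>) (Qbox (R L) z)})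
          \<longlongrightarrow> 0) at_top)"
proof -
  obtain c c' where "0 < c" and "0 < c'" and "\<forall>L\<ge>1. \<forall>x. x \<noteq> 0 \<longrightarrow>
      1 - exp (c' * znorm x) / dparam (v L) \<le> v L x \<and> v L x \<le> 1 - c / dparam (v L)"
    using condII by blast
  then interpret gaussian_potential M xi v a R r phi c c'
    using P gauss unitvar nonneg condI a_def R2 r1 phibar stand1 stand2
    unfolding gaussian_potential_def gaussian_potential_axioms_def by auto
  show ?thesis
    using eventually_Xi_high_xi_low_event_empty scaled_prob_Aev_xi_tendsto_zero
      scaled_prob_Aev_Xi_tendsto_zero scaled_prob_arg_max_event_tendsto_zero
    by blast
qed

end
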